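(* Let $\lambda_0,\lambda_1,c_1\ge0$ and $p_0,p_1\in(0,1)$. Let $\{V(n)\}_{n\in\mathbb{Z}}$ be independent random variables with $V(n)=\lambda_0\xi_n$ for even $n$ and $V(n)=\lambda_1\xi_n+c_1$ for odd $n$, where $\xi_n$ is Bernoulli, equal to $1$ with probability $p_0$ (n even), resp. $p_1$ (n odd), and $0$ otherwise. Let $H_V$ be the operator $(H_V\phi)(n)=\phi(n+1)+\phi(n-1)+V(n)\phi(n)$ on $\ell^2(\mathbb{Z})$ and $\Sigma$ its almost sure spectrum. Write $R_1=\sqrt{(\lambda_0+c_1)^2-4(c_1\lambda_0-4)}$ and $R_2=\sqrt{(\lambda_0+\lambda_1+c_1)^2-4(\lambda_0(\lambda_1+c_1)-4)}$. Then: (1) If $\lambda_0\le c_1\le c_1+\lambda_1$, then $\mathbb{R}\setminus\Sigma=\big(-\infty,\tfrac12(c_1-\sqrt{c_1^2+16})\big)\cup\big(0,\tfrac12(\lambda_0+c_1-R_1)\big)\cup(\lambda_0,c_1)\cup\big(\tfrac12(\lambda_0+c_1+R_1),c_1+\lambda_1\big)\cup\big(\tfrac12(\lambda_0+\lambda_1+c_1+R_2),\infty\big).$ (2) If $c_1<\lambda_0<c_1+\lambda_1$, then $\mathbb{R}\setminus\Sigma=\big(-\infty,\tfrac12(c_1-\sqrt{c_1^2+16})\big)\cup\big(0,\tfrac12(\lambda_0+c_1-R_1)\big)\cup\big(\tfrac12(c_1+\sqrt{c_1^2+16}),\tfrac12(\lambda_0+\lambda_1+c_1-R_2)\big)\cup\big(\tfrac12(\lambda_0+c_1+R_1),c_1+\lambda_1\big)\cup\big(\tfrac12(\lambda_0+\lambda_1+c_1+R_2),\infty\big).$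 (3) If $c_1\le c_1+\lambda_1\le\lambda_0$, then $\mathbb{R}\setminus\Sigma=\big(-\infty,\tfrac12(c_1-\sqrt{c_1^2+16})\big)\cup\big(0,\tfrac12(\lambda_0+c_1-R_1)\big)\cup\big(\tfrac12(c_1+\sqrt{c_1^2+16}),\tfrac12(\lambda_0+\lambda_1+c_1-R_2)\big)\cup\big(\tfrac12(c_1+\lambda_1+\sqrt{(c_1+\lambda_1)^2+16}),\lambda_0\big)\cup\big(\tfrac12(\lambda_0+\lambda_1+c_1+R_2),\infty\big).$ Here an interval $(a,b)$ with $a\ge b$ is understood to be empty.
   Context: The spectrum of a bounded operator $H$ is $\{E\in\mathbb{R}: H-E\text{ has no bounded inverse}\}$; the almost sure spectrum $\Sigma$ is the deterministic set with $\sigma(H_V)=\Sigma$ for almost every realization of the potential. *)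

theory Defs
  imports "HOL-Probability.Probability"
begin

definition l2Z :: "(int \<Rightarrow> complex) set" where
  "l2Z = {\<phi>. (\<lambda>n. (cmod (\<phi> n))\<^sup>2) summable_on UNIV}"

definition l2norm :: "(int \<Rightarrow> complex) \<Rightarrow> real" where
  "l2norm \<phi> = sqrt (infsum (\<lambda>n. (cmod (\<phi> n))\<^sup>2) UNIV)"

definition schrod :: "(int \<Rightarrow> real) \<Rightarrow> (int \<Rightarrow> complex) \<Rightarrow> (int \<Rightarrow> complex)" where
  "schrod V \<phi> = (\<lambda>n. \<phi> (n + 1) + \<phi> (n - 1) + complex_of_real (V n) * \<phi> n)"

definition schrod_spectrum :: "(int \<Rightarrow> real) \<Rightarrow> real set" where
  "schrod_spectrum V = {E. \<not> (\<exists>G. G ` l2Z \<subseteq> l2Z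
      \<and> (\<exists>C. \<forall>\<phi>\<in>l2Z. l2norm (G \<phi>) \<le> C * l2norm \<phi>)
      \<and> (\<forall>\<phi>\<in>l2Z. G (\<lambda>n. schrod V \<phi> n - complex_of_real E * \<phi> n) = \<phi>)
      \<and> (\<forall>\<phi>\<in>l2Z. (\<lambda>n. schrod V (G \<phi>) n - complex_of_real E * G \<phi> n) = \<phi>))}"

definition bern_measure :: "real \<Rightarrow> real \<Rightarrow> (int \<Rightarrow> bool) measure" where
  "bern_measure p0 p1 = PiM UNIV (\<lambda>n::int. measure_pmf (bernoulli_pmf (if even n then p0 else p1)))"

definition pot :: "real \<Rightarrow> real \<Rightarrow> real \<Rightarrow> (int \<Rightarrow> bool) \<Rightarrow> int \<Rightarrow> real" where
  "pot l0 l1 c1 \<xi> n = (if even n then l0 * (if \<xi> n then 1 else 0)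
                         else l1 * (if \<xi> n then 1 else 0) + c1)"

end

theory Submission
  imports Defs
begin

text \<open>
  Almost surely every finite pattern of the Bernoulli variables occurs, starting at some even
  site, so the spectrum of \<open>H_V\<close> is the union of the spectra of the four 2-periodic operators
  with value \<open>a \<in> {0, \<lambda>0}\<close> on even and \<open>b \<in> {c1, c1 + \<lambda>1}\<close> on odd sites; such a
  periodic spectrum is \<open>{E. 0 \<le> (E - a) (E - b) \<le> 4}\<close>.

  Each periodic band lies in the spectrum because Bloch waves of the periodic operator, cut off
  to long windows on which \<open>V\<close> is periodic, are Weyl sequences. Conversely, if \<open>E\<close> lies in a
  gap of all four periodic operators, put \<open>d = V - E\<close> and \<open>\<sigma> = sgn d\<close>. On neighbouring
  sites where \<open>d\<close> has the same sign, \<open>(E - a) (E - b) > 4\<close> lets the potential absorb the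
  hopping term, which gives \<open>Re \<langle>\<phi>, \<sigma> (H_V - E) \<phi>\<rangle> \<ge> 2 \<delta> \<parallel>\<phi>\<parallel>\<^sup>2\<close> for some
  \<open>\<delta> > 0\<close>. Hence \<open>I - t \<sigma> (H_V - E)\<close> is a contraction for small \<open>t > 0\<close>, and its
  Neumann series inverts \<open>H_V - E\<close>. The interval description follows from the band edges
  \<open>(a + b \<plusminus> sqrt ((a - b)\<^sup>2 + 16)) / 2\<close> and their monotonicity in \<open>a\<close> and \<open>b\<close>.
\<close>

section \<open>Square-summable sequences on the integers\<close>

definition l2sq :: "(int \<Rightarrow> complex) \<Rightarrow> real" where
  "l2sq \<phi> = infsum (\<lambda>n. (cmod (\<phi> n))\<^sup>2) UNIV"

lemma l2norm_eq_sqrt_l2sq: "l2norm \<phi> = sqrt (l2sq \<phi>)"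
  by (simp add: l2norm_def l2sq_def)

lemma l2Z_iff: "\<phi> \<in> l2Z \<longleftrightarrow> (\<lambda>n. (cmod (\<phi> n))\<^sup>2) summable_on UNIV"
  by (simp add: l2Z_def)

lemma l2sq_nonneg: "0 \<le> l2sq \<phi>"
  unfolding l2sq_def by (rule infsum_nonneg) auto

lemma l2norm_nonneg: "0 \<le> l2norm \<phi>"
  by (simp add: l2norm_eq_sqrt_l2sq l2sq_nonneg)

lemma summable_on_diff:
  fixes f g :: "'a \<Rightarrow> 'b::{topological_ab_group_add, t2_space}"
  assumes "f summable_on A" "g summable_on A"
  shows "(\<lambda>x. f x - g x) summable_on A"
  using summable_on_add[OF assms(1) summable_on_uminus[THEN iffD2, OF assms(2)]] by simp

lemma infsum_diff:
  fixes f g :: "'a \<Rightarrow> 'b::{topological_ab_group_add, t2_space}"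
  assumes "f summable_on A" "g summable_on A"
  shows "infsum (\<lambda>x. f x - g x) A = infsum f A - infsum g A"
  using infsum_add[OF assms(1) summable_on_uminus[THEN iffD2, OF assms(2)]] infsum_uminus[of g A]
  by simp

lemma summable_on_real_comparison:
  fixes f g :: "'a \<Rightarrow> real"
  assumes "g summable_on A" "\<And>x. x \<in> A \<Longrightarrow> \<bar>f x\<bar> \<le> g x"
  shows "f summable_on A"
proof -
  have "(\<lambda>x. norm (f x)) summable_on A"
    by (rule Infinite_Sum.abs_summable_on_comparison_test'[OF assms(1)]) (use assms(2) in auto)
  then show ?thesis
    by (rule abs_summable_summable)
qed

lemma
  fixes f :: "int \<Rightarrow> 'b::{topological_ab_group_add, t2_space}"
  assumes "f summable_on UNIV"
  shows summable_on_shift: "(\<lambda>n. f (n + k)) summable_on UNIV"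
    and infsum_shift: "infsum (\<lambda>n. f (n + k)) UNIV = infsum f UNIV"
proof -
  have b: "bij_betw (\<lambda>n. n + k) UNIV UNIV"
    by (rule bij_betwI[where g = "\<lambda>n. n - k"]) auto
  show "(\<lambda>n. f (n + k)) summable_on UNIV"
    using summable_on_reindex_bij_betw[OF b, of f] assms by (simp add: comp_def)
  show "infsum (\<lambda>n. f (n + k)) UNIV = infsum f UNIV"
    using infsum_reindex_bij_betw[OF b, of f] by simp
qed

lemma has_sum_shift_diff:
  fixes g :: "int \<Rightarrow> 'b::{topological_ab_group_add, t2_space}"
  assumes "g summable_on UNIV"
  shows "((\<lambda>n. g n - g (n + 1)) has_sum 0) UNIV"
  using summable_on_diff[OF assms summable_on_shift[OF assms]]
    infsum_diff[OF assms summable_on_shift[OF assms]] infsum_shift[OF assms]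
  by (simp add: has_sum_iff)

lemma
  assumes "\<phi> \<in> l2Z"
  shows l2Z_shift: "(\<lambda>n. \<phi> (n + k)) \<in> l2Z"
    and l2sq_shift: "l2sq (\<lambda>n. \<phi> (n + k)) = l2sq \<phi>"
  using summable_on_shift[of "\<lambda>n. (cmod (\<phi> n))\<^sup>2" k] infsum_shift[of "\<lambda>n. (cmod (\<phi> n))\<^sup>2" k] assms
  by (auto simp: l2Z_iff l2sq_def)

lemma
  assumes "\<phi> \<in> l2Z"
  shows summable_on_cmod_sq_shift: "(\<lambda>n. (cmod (\<phi> (n + k)))\<^sup>2) summable_on UNIV"
    and infsum_cmod_sq_shift: "infsum (\<lambda>n. (cmod (\<phi> (n + k)))\<^sup>2) UNIV = l2sq \<phi>"
  using l2Z_shift[OF assms, of k] l2sq_shift[OF assms, of k] by (simp_all add: l2Z_iff l2sq_def)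

lemma cmod_sq_le_l2sq:
  assumes "\<phi> \<in> l2Z"
  shows "(cmod (\<phi> n))\<^sup>2 \<le> l2sq \<phi>"
proof -
  have "infsum (\<lambda>n. (cmod (\<phi> n))\<^sup>2) {n} \<le> infsum (\<lambda>n. (cmod (\<phi> n))\<^sup>2) UNIV"
    by (rule infsum_mono_neutral) (use assms in \<open>auto simp: l2Z_iff\<close>)
  then show ?thesis by (simp add: l2sq_def)
qed

lemma
  assumes "finite S" "\<And>n. n \<notin> S \<Longrightarrow> \<phi> n = 0"
  shows l2Z_finite_support: "\<phi> \<in> l2Z"
    and l2sq_finite_support: "l2sq \<phi> = (\<Sum>n\<in>S. (cmod (\<phi> n))\<^sup>2)"
proof -
  have "infsum (\<lambda>n. (cmod (\<phi> n))\<^sup>2) UNIV = infsum (\<lambda>n. (cmod (\<phi> n))\<^sup>2) S"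
    by (rule infsum_cong_neutral) (use assms in auto)
  then show "l2sq \<phi> = (\<Sum>n\<in>S. (cmod (\<phi> n))\<^sup>2)"
    using assms(1) by (simp add: l2sq_def)
  have "(\<lambda>n. (cmod (\<phi> n))\<^sup>2) summable_on S"
    using assms(1) by simp
  then show "\<phi> \<in> l2Z" unfolding l2Z_iff
    by (rule summable_on_cong_neutral[THEN iffD1, rotated -1]) (use assms in auto)
qed

lemma l2norm_finite_support_le:
  assumes "finite S" "\<And>n. n \<notin> S \<Longrightarrow> \<psi> n = 0" "\<And>n. cmod (\<psi> n) \<le> C"
  shows "l2norm \<psi> \<le> sqrt (card S) * C"
proof -
  have C: "0 \<le> C"
    using assms(3)[of 0] norm_ge_zero order_trans by blast
  have "l2sq \<psi> = (\<Sum>n\<in>S. (cmod (\<psi> n))\<^sup>2)"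
    by (rule l2sq_finite_support[OF assms(1,2)])
  also have "\<dots> \<le> (\<Sum>n\<in>S. C\<^sup>2)"
    using assms(3) by (intro sum_mono power_mono) auto
  finally have "l2norm \<psi> \<le> sqrt (card S * C\<^sup>2)"
    unfolding l2norm_eq_sqrt_l2sq by simp
  also have "\<dots> = sqrt (card S) * C"
    using C by (simp add: real_sqrt_mult)
  finally show ?thesis .
qed

lemma
  assumes \<psi>: "\<psi> \<in> l2Z" and c: "\<And>n. cmod (c n) \<le> C"
  shows l2Z_mult_bounded: "(\<lambda>n. c n * \<psi> n) \<in> l2Z"
    and l2norm_mult_bounded_le: "l2norm (\<lambda>n. c n * \<psi> n) \<le> C * l2norm \<psi>"
proof -
  have C: "0 \<le> C"
    using c[of 0] norm_ge_zero order_trans by blast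
  have sq: "(\<lambda>n. C\<^sup>2 * (cmod (\<psi> n))\<^sup>2) summable_on UNIV"
    using \<psi> by (intro summable_on_cmult_right) (simp add: l2Z_iff)
  have pt: "(cmod (c n * \<psi> n))\<^sup>2 \<le> C\<^sup>2 * (cmod (\<psi> n))\<^sup>2" for n
    unfolding norm_mult power_mult_distrib using c[of n] by (intro mult_right_mono power_mono) auto
  show l2: "(\<lambda>n. c n * \<psi> n) \<in> l2Z"
    unfolding l2Z_iff by (rule summable_on_comparison_test[OF sq]) (use pt in auto)
  have "l2sq (\<lambda>n. c n * \<psi> n) \<le> infsum (\<lambda>n. C\<^sup>2 * (cmod (\<psi> n))\<^sup>2) UNIV"
    unfolding l2sq_def using l2 sq pt by (intro infsum_mono) (auto simp: l2Z_iff)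
  then have "l2norm (\<lambda>n. c n * \<psi> n) \<le> sqrt (C\<^sup>2 * l2sq \<psi>)"
    by (simp add: l2norm_eq_sqrt_l2sq l2sq_def infsum_cmult_right')
  also have "\<dots> = C * l2norm \<psi>"
    using C by (simp add: real_sqrt_mult l2norm_eq_sqrt_l2sq)
  finally show "l2norm (\<lambda>n. c n * \<psi> n) \<le> C * l2norm \<psi>" .
qed

definition l2norm_on :: "int set \<Rightarrow> (int \<Rightarrow> complex) \<Rightarrow> real" where
  "l2norm_on F \<phi> = L2_set (\<lambda>n. cmod (\<phi> n)) F"

lemma l2norm_on_triangle: "l2norm_on F (\<lambda>n. \<phi> n + \<psi> n) \<le> l2norm_on F \<phi> + l2norm_on F \<psi>"
proof -
  have "l2norm_on F (\<lambda>n. \<phi> n + \<psi> n) \<le> L2_set (\<lambda>n. cmod (\<phi> n) + cmod (\<psi> n)) F"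
    unfolding l2norm_on_def by (rule L2_set_mono) (auto simp: norm_triangle_ineq)
  also have "\<dots> \<le> l2norm_on F \<phi> + l2norm_on F \<psi>"
    unfolding l2norm_on_def by (rule L2_set_triangle_ineq)
  finally show ?thesis .
qed

lemma l2norm_on_sum: "l2norm_on F (\<lambda>n. \<Sum>k<(K::nat). \<phi> k n) \<le> (\<Sum>k<K. l2norm_on F (\<phi> k))"
proof (induction K)
  case 0
  then show ?case by (simp add: l2norm_on_def L2_set_def)
next
  case (Suc K)
  have "l2norm_on F (\<lambda>n. \<Sum>k<Suc K. \<phi> k n) \<le> l2norm_on F (\<lambda>n. \<Sum>k<K. \<phi> k n) + l2norm_on F (\<phi> K)"
    using l2norm_on_triangle by simp
  then show ?case using Suc by simp
qed

lemma l2norm_on_le_l2norm: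
  assumes "\<phi> \<in> l2Z" "finite F"
  shows "l2norm_on F \<phi> \<le> l2norm \<phi>"
proof -
  have "infsum (\<lambda>n. (cmod (\<phi> n))\<^sup>2) F \<le> infsum (\<lambda>n. (cmod (\<phi> n))\<^sup>2) UNIV"
    by (rule infsum_mono_neutral) (use assms in \<open>auto simp: l2Z_iff\<close>)
  then show ?thesis
    using assms(2) by (simp add: l2norm_on_def L2_set_def l2norm_def)
qed

lemma
  assumes "\<And>F. finite F \<Longrightarrow> l2norm_on F \<phi> \<le> B"
  shows l2Z_if_l2norm_on_le: "\<phi> \<in> l2Z"
    and l2norm_le_if_l2norm_on_le: "l2norm \<phi> \<le> B"
proof -
  have B: "0 \<le> B"
    using assms[of "{}"] by (simp add: l2norm_on_def)
  have sums: "(\<Sum>n\<in>F. (cmod (\<phi> n))\<^sup>2) \<le> B\<^sup>2" if "finite F" for F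
  proof -
    have "(\<Sum>n\<in>F. (cmod (\<phi> n))\<^sup>2) = (l2norm_on F \<phi>)\<^sup>2"
      by (simp add: l2norm_on_def L2_set_def sum_nonneg)
    also have "\<dots> \<le> B\<^sup>2"
      using assms[OF that] by (intro power_mono) (auto simp: l2norm_on_def)
    finally show ?thesis .
  qed
  show l2: "\<phi> \<in> l2Z" unfolding l2Z_iff
    by (rule nonneg_bdd_above_summable_on) (use sums in \<open>auto intro!: bdd_aboveI2\<close>)
  have "l2sq \<phi> \<le> B\<^sup>2" unfolding l2sq_def
    by (rule infsum_le_finite_sums) (use l2 sums in \<open>auto simp: l2Z_iff\<close>)
  then show "l2norm \<phi> \<le> B"
    using B by (simp add: l2norm_eq_sqrt_l2sq real_sqrt_le_iff real_le_lsqrt)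
qed

section \<open>Neumann series of tridiagonal contractions\<close>

definition tridiag ::
    "(int \<Rightarrow> complex) \<Rightarrow> (int \<Rightarrow> complex) \<Rightarrow> (int \<Rightarrow> complex) \<Rightarrow> (int \<Rightarrow> complex) \<Rightarrow> int \<Rightarrow> complex"
  where "tridiag a b c \<phi> = (\<lambda>n. a n * \<phi> (n - 1) + b n * \<phi> n + c n * \<phi> (n + 1))"

lemma tridiag_diff: "tridiag a b c (\<lambda>n. \<phi> n - \<psi> n) = (\<lambda>n. tridiag a b c \<phi> n - tridiag a b c \<psi> n)"
  by (simp add: tridiag_def fun_eq_iff algebra_simps)

lemma funpow_tridiag_diff:
  "(tridiag a b c ^^ k) (\<lambda>n. \<phi> n - \<psi> n) = (\<lambda>n. (tridiag a b c ^^ k) \<phi> n - (tridiag a b c ^^ k) \<psi> n)"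
  by (induction k) (simp_all add: tridiag_diff)

locale tridiag_contraction =
  fixes a b c :: "int \<Rightarrow> complex" and q :: real
  assumes q_nonneg: "0 \<le> q" and q_less_1: "q < 1"
    and contraction: "\<And>\<phi>. \<phi> \<in> l2Z \<Longrightarrow> tridiag a b c \<phi> \<in> l2Z \<and> l2sq (tridiag a b c \<phi>) \<le> q\<^sup>2 * l2sq \<phi>"
begin

abbreviation "N \<equiv> tridiag a b c"

lemma funpow_l2:
  assumes "\<phi> \<in> l2Z"
  shows "(N ^^ k) \<phi> \<in> l2Z \<and> l2sq ((N ^^ k) \<phi>) \<le> (q ^ k)\<^sup>2 * l2sq \<phi>"
proof (induction k)
  case 0
  then show ?case using assms by simp
next
  case (Suc k)
  then have "N ((N ^^ k) \<phi>) \<in> l2Z" "l2sq (N ((N ^^ k) \<phi>)) \<le> q\<^sup>2 * l2sq ((N ^^ k) \<phi>)"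
    using contraction by auto
  moreover have "q\<^sup>2 * l2sq ((N ^^ k) \<phi>) \<le> q\<^sup>2 * ((q ^ k)\<^sup>2 * l2sq \<phi>)"
    using Suc by (intro mult_left_mono) auto
  ultimately show ?case by (simp add: power_mult_distrib power2_eq_square algebra_simps)
qed

lemma funpow_l2norm_le:
  assumes "\<phi> \<in> l2Z"
  shows "l2norm ((N ^^ k) \<phi>) \<le> q ^ k * l2norm \<phi>"
proof -
  have "l2norm ((N ^^ k) \<phi>) \<le> sqrt ((q ^ k)\<^sup>2 * l2sq \<phi>)"
    using funpow_l2[OF assms, of k] by (simp add: l2norm_eq_sqrt_l2sq)
  also have "\<dots> = q ^ k * l2norm \<phi>"
    using q_nonneg by (simp add: real_sqrt_mult l2norm_eq_sqrt_l2sq)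
  finally show ?thesis .
qed

lemma summable_funpow:
  assumes "\<phi> \<in> l2Z"
  shows "summable (\<lambda>k. (N ^^ k) \<phi> n)"
proof (rule summable_comparison_test)
  have "cmod ((N ^^ k) \<phi> n) \<le> l2norm ((N ^^ k) \<phi>)" for k
    using cmod_sq_le_l2sq[of "(N ^^ k) \<phi>" n] funpow_l2[OF assms, of k]
    by (simp add: l2norm_eq_sqrt_l2sq real_le_rsqrt)
  then show "\<exists>N0. \<forall>k\<ge>N0. norm ((N ^^ k) \<phi> n) \<le> q ^ k * l2norm \<phi>"
    using funpow_l2norm_le[OF assms] order_trans by blast
  show "summable (\<lambda>k. q ^ k * l2norm \<phi>)"
    using q_nonneg q_less_1 by (intro summable_mult2 summable_geometric) auto
qed

text \<open>\<^const>\<open>l2Z\<close> is a set of functions, not a Banach space type, so the Neumann series is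
  summed pointwise; the partial sums converge at every site because \<open>\<bar>(N ^^ k) \<psi> n\<bar> \<le> q ^ k \<parallel>\<psi>\<parallel>\<close>.\<close>
definition neumann :: "(int \<Rightarrow> complex) \<Rightarrow> int \<Rightarrow> complex" where
  "neumann \<psi> = (\<lambda>n. \<Sum>k. (N ^^ k) \<psi> n)"

lemma l2norm_on_partial_neumann_le:
  assumes "\<psi> \<in> l2Z" "finite F"
  shows "l2norm_on F (\<lambda>n. \<Sum>k<K. (N ^^ k) \<psi> n) \<le> l2norm \<psi> / (1 - q)"
proof -
  have "l2norm_on F (\<lambda>n. \<Sum>k<K. (N ^^ k) \<psi> n) \<le> (\<Sum>k<K. l2norm_on F ((N ^^ k) \<psi>))"
    by (rule l2norm_on_sum)
  also have "\<dots> \<le> (\<Sum>k<K. q ^ k) * l2norm \<psi>"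
    unfolding sum_distrib_right
    using l2norm_on_le_l2norm[OF _ assms(2)] funpow_l2 funpow_l2norm_le assms(1)
    by (intro sum_mono) (meson order_trans)
  also have "\<dots> \<le> 1 / (1 - q) * l2norm \<psi>"
  proof (rule mult_right_mono)
    show "(\<Sum>k<K. q ^ k) \<le> 1 / (1 - q)"
      using q_nonneg q_less_1 sum_le_suminf[OF summable_geometric, of q "{..<K}"] suminf_geometric[of q]
      by auto
  qed (rule l2norm_nonneg)
  finally show ?thesis
    by simp
qed

lemma
  assumes "\<psi> \<in> l2Z"
  shows neumann_l2Z: "neumann \<psi> \<in> l2Z"
    and l2norm_neumann_le: "l2norm (neumann \<psi>) \<le> l2norm \<psi> / (1 - q)"
proof -
  have windows: "l2norm_on F (neumann \<psi>) \<le> l2norm \<psi> / (1 - q)" if "finite F" for F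
  proof (rule LIMSEQ_le_const2)
    show "(\<lambda>K. l2norm_on F (\<lambda>n. \<Sum>k<K. (N ^^ k) \<psi> n)) \<longlonglongrightarrow> l2norm_on F (neumann \<psi>)"
      unfolding l2norm_on_def L2_set_def neumann_def
      by (intro tendsto_intros summable_LIMSEQ summable_funpow[OF assms])
  qed (use l2norm_on_partial_neumann_le[OF assms that] in auto)
  show "neumann \<psi> \<in> l2Z"
    using windows by (rule l2Z_if_l2norm_on_le)
  show "l2norm (neumann \<psi>) \<le> l2norm \<psi> / (1 - q)"
    using windows by (rule l2norm_le_if_l2norm_on_le)
qed

lemma neumann_right_inverse:
  assumes "\<psi> \<in> l2Z"
  shows "neumann \<psi> n - N (neumann \<psi>) n = \<psi> n"
proof -
  have s: "summable (\<lambda>k. (N ^^ k) \<psi> m)" for m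
    using summable_funpow[OF assms] .
  have "N (neumann \<psi>) n = (\<Sum>k. a n * (N ^^ k) \<psi> (n - 1) + b n * (N ^^ k) \<psi> n + c n * (N ^^ k) \<psi> (n + 1))"
    using s by (simp add: tridiag_def neumann_def suminf_add[symmetric] suminf_mult[symmetric]
        summable_add summable_mult)
  also have "\<dots> = (\<Sum>k. (N ^^ Suc k) \<psi> n)"
    by (simp add: tridiag_def)
  finally show ?thesis
    unfolding neumann_def using suminf_split_initial_segment[OF s[of n], of 1] by simp
qed

lemma neumann_left_inverse:
  assumes "\<phi> \<in> l2Z"
  shows "neumann (\<lambda>n. \<phi> n - N \<phi> n) = \<phi>"
proof
  fix n
  have "(\<lambda>k. (N ^^ k) \<phi> n - (N ^^ Suc k) \<phi> n) sums ((N ^^ 0) \<phi> n - 0)"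
    by (rule telescope_sums') (rule summable_LIMSEQ_zero[OF summable_funpow[OF assms]])
  then show "neumann (\<lambda>n. \<phi> n - N \<phi> n) n = \<phi> n"
    unfolding neumann_def by (simp add: funpow_tridiag_diff funpow_swap1 sums_iff)
qed

end

section \<open>Invertibility in spectral gaps\<close>

lemma schrod_minus_const: "(\<lambda>n. schrod V \<phi> n - complex_of_real E * \<phi> n) = schrod (\<lambda>n. V n - E) \<phi>"
  by (simp add: schrod_def fun_eq_iff algebra_simps)

lemma cmod_add3_sq_le: "(cmod (a + b + c))\<^sup>2 \<le> 3 * ((cmod a)\<^sup>2 + (cmod b)\<^sup>2 + (cmod c)\<^sup>2)"
proof -
  have "(cmod (a + b + c))\<^sup>2 \<le> (cmod a + cmod b + cmod c)\<^sup>2"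
    by (intro power_mono norm_triangle_le add_mono order_refl norm_triangle_ineq) simp
  moreover have "0 \<le> (cmod a - cmod b)\<^sup>2 + (cmod b - cmod c)\<^sup>2 + (cmod a - cmod c)\<^sup>2"
    by simp
  ultimately show ?thesis
    by (simp add: power2_eq_square algebra_simps)
qed

lemma
  assumes \<phi>: "\<phi> \<in> l2Z" and d: "\<And>n. \<bar>d n\<bar> \<le> D"
  shows schrod_l2Z: "schrod d \<phi> \<in> l2Z"
    and l2sq_schrod_le: "l2sq (schrod d \<phi>) \<le> 3 * (2 + D\<^sup>2) * l2sq \<phi>"
proof -
  define x where "x n = (cmod (\<phi> n))\<^sup>2" for n
  let ?g = "\<lambda>n. 3 * (x (n + 1) + x (n - 1) + D\<^sup>2 * x n)"
  have sx: "(\<lambda>n. x (n + k)) summable_on UNIV" and ix: "infsum (\<lambda>n. x (n + k)) UNIV = l2sq \<phi>" for k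
    unfolding x_def by (rule summable_on_cmod_sq_shift[OF \<phi>] infsum_cmod_sq_shift[OF \<phi>])+
  have s1: "(\<lambda>n. x (n + 1) + x (n - 1)) summable_on UNIV"
    using summable_on_add[OF sx[of 1] sx[of "-1"]] by simp
  have s2: "(\<lambda>n. D\<^sup>2 * x n) summable_on UNIV"
    using summable_on_cmult_right[OF sx[of 0]] by simp
  have sg: "?g summable_on UNIV"
    by (intro summable_on_cmult_right summable_on_add s1 s2)
  have ig: "infsum ?g UNIV = 3 * (2 + D\<^sup>2) * l2sq \<phi>"
    using infsum_cmult_right[OF summable_on_add[OF s1 s2], of 3] infsum_add[OF s1 s2]
      infsum_add[OF sx[of 1] sx[of "-1"]] infsum_cmult_right[OF sx[of 0], of "D\<^sup>2"] ix[of 1] ix[of "-1"] ix[of 0]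
    by (simp add: algebra_simps)
  have pt: "(cmod (schrod d \<phi> n))\<^sup>2 \<le> ?g n" for n
  proof -
    have "(cmod (complex_of_real (d n) * \<phi> n))\<^sup>2 = (d n)\<^sup>2 * x n"
      by (simp add: x_def norm_mult power_mult_distrib)
    also have "\<dots> \<le> D\<^sup>2 * x n"
      using d[of n] by (intro mult_right_mono)
        (auto simp: x_def intro: order_trans[OF _ power_mono[of "\<bar>d n\<bar>"]])
    finally show ?thesis
      using cmod_add3_sq_le[of "\<phi> (n + 1)" "\<phi> (n - 1)" "complex_of_real (d n) * \<phi> n"]
      by (simp add: schrod_def x_def)
  qed
  show "schrod d \<phi> \<in> l2Z" unfolding l2Z_iff
    by (rule summable_on_comparison_test[OF sg]) (use pt in auto)
  then have "l2sq (schrod d \<phi>) \<le> infsum ?g UNIV"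
    unfolding l2sq_def by (intro infsum_mono sg pt) (auto simp: l2Z_iff)
  then show "l2sq (schrod d \<phi>) \<le> 3 * (2 + D\<^sup>2) * l2sq \<phi>"
    using ig by simp
qed

lemma two_mult_le_weighted_squares:
  fixes x y w1 w2 :: real
  assumes "0 \<le> w1" "0 \<le> w2" "1 \<le> w1 * w2"
  shows "2 * x * y \<le> w1 * x\<^sup>2 + w2 * y\<^sup>2"
proof -
  have w1: "0 < w1"
    using assms by (metis less_eq_real_def mult_zero_left not_one_le_zero)
  have "0 \<le> (w1 * x - y)\<^sup>2 + (w1 * w2 - 1) * y\<^sup>2"
    using assms by simp
  also have "\<dots> = w1 * (w1 * x\<^sup>2 + w2 * y\<^sup>2 - 2 * x * y)"
    by (simp add: power2_eq_square algebra_simps)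
  finally show ?thesis
    using w1 by (simp add: zero_le_mult_iff)
qed

lemma abs_Re_cnj_mult_le: "\<bar>Re (cnj a * b)\<bar> \<le> (cmod a)\<^sup>2 + (cmod b)\<^sup>2"
proof -
  have "\<bar>Re (cnj a * b)\<bar> \<le> cmod a * cmod b"
    by (metis abs_Re_le_cmod complex_mod_cnj norm_mult)
  also have "\<dots> \<le> (cmod a)\<^sup>2 + (cmod b)\<^sup>2"
  proof -
    have "0 \<le> cmod a * cmod b" by simp
    moreover have "2 * cmod a * cmod b \<le> (cmod a)\<^sup>2 + (cmod b)\<^sup>2"
      using two_mult_le_weighted_squares[of 1 1] by simp
    ultimately show ?thesis by linarith
  qed
  finally show ?thesis .
qed

lemma summable_on_Re_cnj_mult:
  fixes s :: "int \<Rightarrow> real"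
  assumes "\<phi> \<in> l2Z" "\<psi> \<in> l2Z" "\<And>n. \<bar>s n\<bar> \<le> C"
  shows "(\<lambda>n. s n * Re (cnj (\<phi> n) * \<psi> n)) summable_on UNIV"
proof (rule summable_on_real_comparison)
  show "(\<lambda>n. C * ((cmod (\<phi> n))\<^sup>2 + (cmod (\<psi> n))\<^sup>2)) summable_on UNIV"
    using assms(1,2) by (intro summable_on_cmult_right summable_on_add) (simp_all add: l2Z_iff)
  show "\<bar>s n * Re (cnj (\<phi> n) * \<psi> n)\<bar> \<le> C * ((cmod (\<phi> n))\<^sup>2 + (cmod (\<psi> n))\<^sup>2)" for n
    unfolding abs_mult using assms(3)[of n] abs_Re_cnj_mult_le by (intro mult_mono) auto
qed

lemma
  fixes \<sigma> :: "int \<Rightarrow> real"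
  assumes \<phi>: "\<phi> \<in> l2Z" and \<psi>: "\<psi> \<in> l2Z" and \<sigma>: "\<And>n. \<bar>\<sigma> n\<bar> = 1"
  shows l2Z_diff_scaled: "(\<lambda>n. \<phi> n - complex_of_real (t * \<sigma> n) * \<psi> n) \<in> l2Z"
    and l2sq_diff_scaled: "l2sq (\<lambda>n. \<phi> n - complex_of_real (t * \<sigma> n) * \<psi> n)
      = l2sq \<phi> - 2 * t * infsum (\<lambda>n. Re (cnj (\<phi> n) * (complex_of_real (\<sigma> n) * \<psi> n))) UNIV + t\<^sup>2 * l2sq \<psi>"
proof -
  define I where "I n = \<sigma> n * Re (cnj (\<phi> n) * \<psi> n)" for n
  have sI: "I summable_on UNIV"
    unfolding I_def using summable_on_Re_cnj_mult[OF \<phi> \<psi>] \<sigma> by (metis order_refl)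
  have pt: "(cmod (\<phi> n - complex_of_real (t * \<sigma> n) * \<psi> n))\<^sup>2
      = (cmod (\<phi> n))\<^sup>2 - 2 * t * I n + t\<^sup>2 * (cmod (\<psi> n))\<^sup>2" for n
  proof -
    have "(\<sigma> n)\<^sup>2 = 1"
      using \<sigma>[of n] by (metis abs_power2 power2_abs power_one)
    moreover have "(cmod (\<phi> n - complex_of_real (t * \<sigma> n) * \<psi> n))\<^sup>2
        = (cmod (\<phi> n))\<^sup>2 - 2 * (t * \<sigma> n) * Re (cnj (\<phi> n) * \<psi> n) + (t * \<sigma> n)\<^sup>2 * (cmod (\<psi> n))\<^sup>2"
      by (simp only: cmod_power2) (simp add: algebra_simps power2_eq_square)
    ultimately show ?thesis
      unfolding I_def by (simp add: algebra_simps)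
  qed
  have s1: "(\<lambda>n. (cmod (\<phi> n))\<^sup>2 - 2 * t * I n) summable_on UNIV"
    using \<phi> by (intro summable_on_diff summable_on_cmult_right sI) (simp add: l2Z_iff)
  have s2: "(\<lambda>n. t\<^sup>2 * (cmod (\<psi> n))\<^sup>2) summable_on UNIV"
    using \<psi> by (intro summable_on_cmult_right) (simp add: l2Z_iff)
  show "(\<lambda>n. \<phi> n - complex_of_real (t * \<sigma> n) * \<psi> n) \<in> l2Z"
    unfolding l2Z_iff pt using summable_on_add[OF s1 s2] by simp
  have "infsum I UNIV = infsum (\<lambda>n. Re (cnj (\<phi> n) * (complex_of_real (\<sigma> n) * \<psi> n))) UNIV"
    unfolding I_def by (simp add: algebra_simps)
  then show "l2sq (\<lambda>n. \<phi> n - complex_of_real (t * \<sigma> n) * \<psi> n)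
      = l2sq \<phi> - 2 * t * infsum (\<lambda>n. Re (cnj (\<phi> n) * (complex_of_real (\<sigma> n) * \<psi> n))) UNIV + t\<^sup>2 * l2sq \<psi>"
    unfolding l2sq_def pt
    using infsum_add[OF s1 s2] infsum_diff[OF _ summable_on_cmult_right[OF sI, of "2 * t"]] \<phi>
    by (simp add: l2Z_iff infsum_cmult_right')
qed

lemma weighted_schrod_form_has_sum:
  fixes \<sigma> d :: "int \<Rightarrow> real"
  assumes \<phi>: "\<phi> \<in> l2Z" and \<sigma>: "\<And>n. \<bar>\<sigma> n\<bar> \<le> 1" and d: "\<And>n. \<bar>d n\<bar> \<le> D"
  shows "((\<lambda>n. \<sigma> n * d n * (cmod (\<phi> n))\<^sup>2 + (\<sigma> n + \<sigma> (n + 1)) * Re (cnj (\<phi> n) * \<phi> (n + 1)))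
    has_sum infsum (\<lambda>n. Re (cnj (\<phi> n) * (complex_of_real (\<sigma> n) * schrod d \<phi> n))) UNIV) UNIV"
proof -
  define A where "A n = \<sigma> n * d n * Re (cnj (\<phi> n) * \<phi> n)" for n
  define P where "P n = \<sigma> n * Re (cnj (\<phi> n) * \<phi> (n + 1))" for n
  define Q where "Q n = \<sigma> n * Re (cnj (\<phi> n) * \<phi> (n - 1))" for n
  define P' where "P' n = \<sigma> (n + 1) * Re (cnj (\<phi> n) * \<phi> (n + 1))" for n
  have \<sigma>d: "\<bar>\<sigma> n * d n\<bar> \<le> 1 * D" for n
    unfolding abs_mult using \<sigma> d by (intro mult_mono) (auto intro: order_trans[OF abs_ge_zero])
  have sA: "A summable_on UNIV"
    unfolding A_def using summable_on_Re_cnj_mult[OF \<phi> \<phi> \<sigma>d] by (simp add: mult.assoc)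
  have \<phi>_left: "(\<lambda>n. \<phi> (n - 1)) \<in> l2Z"
    using l2Z_shift[OF \<phi>, of "-1"] by simp
  have sP: "P summable_on UNIV" and sQ: "Q summable_on UNIV" and sP': "P' summable_on UNIV"
    unfolding P_def Q_def P'_def
    by (rule summable_on_Re_cnj_mult[OF \<phi> l2Z_shift[OF \<phi>]] summable_on_Re_cnj_mult[OF \<phi> \<phi>_left];
        rule \<sigma>)+
  have form: "Re (cnj (\<phi> n) * (complex_of_real (\<sigma> n) * schrod d \<phi> n)) = A n + P n + Q n" for n
    unfolding A_def P_def Q_def schrod_def by (simp add: algebra_simps)
  have "infsum Q UNIV = infsum (\<lambda>n. Q (n + 1)) UNIV"
    using infsum_shift[OF sQ, of 1] by simp
  also have "(\<lambda>n. Q (n + 1)) = P'"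
    unfolding Q_def P'_def by (simp add: algebra_simps)
  finally have QP': "infsum Q UNIV = infsum P' UNIV" .
  have "(\<lambda>n. \<sigma> n * d n * (cmod (\<phi> n))\<^sup>2 + (\<sigma> n + \<sigma> (n + 1)) * Re (cnj (\<phi> n) * \<phi> (n + 1)))
      = (\<lambda>n. A n + P n + P' n)"
    unfolding A_def P_def P'_def by (simp only: cmod_power2) (simp add: algebra_simps power2_eq_square)
  moreover have "infsum (\<lambda>n. A n + P n + P' n) UNIV = infsum (\<lambda>n. A n + P n + Q n) UNIV"
    using QP' by (simp add: infsum_add summable_on_add sA sP sQ sP')
  ultimately show ?thesis
    unfolding form has_sum_iff by (simp add: summable_on_add sA sP sP')
qed

lemma sign_pair_Re_cnj_lower:
  fixes s t w1 w2 :: real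
  assumes "\<bar>s\<bar> = 1" "\<bar>t\<bar> = 1" "0 \<le> w1" "0 \<le> w2" "s = t \<Longrightarrow> 1 \<le> w1 * w2"
  shows "- (w1 * (cmod a)\<^sup>2 + w2 * (cmod b)\<^sup>2) \<le> (s + t) * Re (cnj a * b)"
proof (cases "s = t")
  case True
  have "\<bar>(s + t) * Re (cnj a * b)\<bar> \<le> 2 * cmod a * cmod b"
    using assms(1) True abs_Re_le_cmod[of "cnj a * b"] by (simp add: abs_mult norm_mult)
  also have "\<dots> \<le> w1 * (cmod a)\<^sup>2 + w2 * (cmod b)\<^sup>2"
    using assms True by (intro two_mult_le_weighted_squares) auto
  finally show ?thesis
    by (simp add: abs_le_iff)
next
  case False
  then have "s + t = 0"
    using assms(1,2) by (auto simp: abs_if split: if_splits)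
  moreover have "0 \<le> w1 * (cmod a)\<^sup>2" "0 \<le> w2 * (cmod b)\<^sup>2"
    using assms(3,4) by simp_all
  ultimately show ?thesis
    by simp
qed

lemma tridiag_damped_schrod:
  "tridiag (\<lambda>n. - \<sigma> n) (\<lambda>n. 1 - \<sigma> n * complex_of_real (d n)) (\<lambda>n. - \<sigma> n) \<phi>
    = (\<lambda>n. \<phi> n - \<sigma> n * schrod d \<phi> n)"
  by (simp add: tridiag_def schrod_def fun_eq_iff algebra_simps)

text \<open>Here \<open>d = V - E\<close> with \<open>E\<close> in a spectral gap. Where \<open>d\<close> has the same sign at two
  neighbouring sites, the last condition lets the potential absorb the hopping term between them.\<close>
locale gapped_potential =
  fixes d :: "int \<Rightarrow> real" and \<delta> D :: real
  assumes delta_pos: "0 < \<delta>"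
    and lower: "\<And>n. 2 * \<delta> \<le> \<bar>d n\<bar>"
    and upper: "\<And>n. \<bar>d n\<bar> \<le> D"
    and edge: "\<And>n. 0 < d n * d (n + 1) \<Longrightarrow> 1 \<le> (\<bar>d n\<bar> / 2 - \<delta>) * (\<bar>d (n + 1)\<bar> / 2 - \<delta>)"
begin

lemma abs_sgn_eq_1: "\<bar>sgn (d n)\<bar> = 1"
  using lower[of n] delta_pos by (auto simp: sgn_if)

lemma sgn_schrod_form_lower_bound:
  assumes \<phi>: "\<phi> \<in> l2Z"
  shows "2 * \<delta> * l2sq \<phi> \<le> infsum (\<lambda>n. Re (cnj (\<phi> n) * (complex_of_real (sgn (d n)) * schrod d \<phi> n))) UNIV"
proof (rule has_sum_mono)
  define x where "x = (\<lambda>n. (cmod (\<phi> n))\<^sup>2)"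
  define w where "w n = \<bar>d n\<bar> / 2 - \<delta>" for n
  \<comment> \<open>the summand dominates \<open>2 \<delta> x n + g n - g (n + 1)\<close> with \<open>g n = w n * x n\<close>, which telescopes\<close>
  have w: "0 \<le> w n" "w n \<le> D" for n
    using lower[of n] upper[of n] delta_pos by (auto simp: w_def)
  have sx: "x summable_on UNIV"
    using \<phi> by (simp add: x_def l2Z_iff)
  have "(\<lambda>n. w n * x n) summable_on UNIV"
    by (rule summable_on_real_comparison[OF summable_on_cmult_right[OF sx, of D]])
      (use w in \<open>auto simp: x_def abs_mult intro: mult_right_mono\<close>)
  then show "((\<lambda>n. 2 * \<delta> * x n + (w n * x n - w (n + 1) * x (n + 1))) has_sum 2 * \<delta> * l2sq \<phi>) UNIV"
    using has_sum_add[OF has_sum_cmult_right[OF has_sum_infsum[OF sx]] has_sum_shift_diff]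
    by (simp add: x_def l2sq_def)
  show "((\<lambda>n. sgn (d n) * d n * x n + (sgn (d n) + sgn (d (n + 1))) * Re (cnj (\<phi> n) * \<phi> (n + 1)))
      has_sum infsum (\<lambda>n. Re (cnj (\<phi> n) * (complex_of_real (sgn (d n)) * schrod d \<phi> n))) UNIV) UNIV"
    unfolding x_def by (rule weighted_schrod_form_has_sum[OF \<phi> _ upper]) (simp add: abs_sgn_eq_1)
  fix n
  have "- (w n * x n + w (n + 1) * x (n + 1)) \<le> (sgn (d n) + sgn (d (n + 1))) * Re (cnj (\<phi> n) * \<phi> (n + 1))"
  proof (unfold x_def, rule sign_pair_Re_cnj_lower[OF abs_sgn_eq_1 abs_sgn_eq_1 w(1) w(1)])
    assume "sgn (d n) = sgn (d (n + 1))"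
    then have "0 < d n * d (n + 1)"
      using abs_sgn_eq_1[of n] by (auto simp: sgn_if zero_less_mult_iff split: if_splits)
    then show "1 \<le> w n * w (n + 1)"
      unfolding w_def by (rule edge)
  qed
  moreover have "sgn (d n) * d n = 2 * \<delta> + 2 * w n"
    by (simp add: w_def sgn_if)
  ultimately show "2 * \<delta> * x n + (w n * x n - w (n + 1) * x (n + 1))
      \<le> sgn (d n) * d n * x n + (sgn (d n) + sgn (d (n + 1))) * Re (cnj (\<phi> n) * \<phi> (n + 1))"
    by (simp add: algebra_simps)
qed

lemma damped_contraction:
  obtains \<sigma> :: "int \<Rightarrow> complex" and t q where "0 < t" "\<And>n. cmod (\<sigma> n) = t"
    "tridiag_contraction (\<lambda>n. - \<sigma> n) (\<lambda>n. 1 - \<sigma> n * d n) (\<lambda>n. - \<sigma> n) q"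
proof -
  \<comment> \<open>\<open>\<parallel>\<phi> - t sgn(d) H\<^sub>d \<phi>\<parallel>\<^sup>2 \<le> (1 - 4 \<delta> t + K t\<^sup>2) \<parallel>\<phi>\<parallel>\<^sup>2\<close>, minimised at \<open>t = 2 \<delta> / K\<close>\<close>
  define K where "K = 3 * (2 + D\<^sup>2)"
  define t where "t = 2 * \<delta> / K"
  define q where "q = sqrt (1 - 4 * \<delta>\<^sup>2 / K)"
  have "2 * \<delta> \<le> D"
    using lower[of 0] upper[of 0] by linarith
  then have "4 * \<delta>\<^sup>2 \<le> D\<^sup>2" and "0 \<le> D\<^sup>2"
    using delta_pos power_mono[of "2 * \<delta>" D 2] by (simp_all add: power_mult_distrib)
  then have K: "0 < K" "4 * \<delta>\<^sup>2 \<le> K"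
    unfolding K_def by (simp_all only: distrib_left)
  have t: "0 < t"
    using delta_pos K by (simp add: t_def)
  have q: "0 \<le> q" "q < 1" "q\<^sup>2 = 1 - 4 * \<delta>\<^sup>2 / K"
    using K delta_pos by (auto simp: q_def)
  show thesis
  proof (rule that[of t "\<lambda>n. complex_of_real (t * sgn (d n))" q], unfold_locales, unfold tridiag_damped_schrod)
    show "0 < t" "0 \<le> q" "q < 1"
      by (fact t q(1,2))+
    show "cmod (complex_of_real (t * sgn (d n))) = t" for n
      unfolding norm_of_real abs_mult using t abs_sgn_eq_1[of n] by simp
    fix \<phi> assume \<phi>: "\<phi> \<in> l2Z"
    let ?M = "schrod d \<phi>"
    have M: "?M \<in> l2Z" "l2sq ?M \<le> K * l2sq \<phi>"
      unfolding K_def by (rule schrod_l2Z[OF \<phi> upper] l2sq_schrod_le[OF \<phi> upper])+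
    have "l2sq (\<lambda>n. \<phi> n - complex_of_real (t * sgn (d n)) * ?M n)
        = l2sq \<phi> - 2 * t * infsum (\<lambda>n. Re (cnj (\<phi> n) * (complex_of_real (sgn (d n)) * ?M n))) UNIV + t\<^sup>2 * l2sq ?M"
      by (rule l2sq_diff_scaled[OF \<phi> M(1) abs_sgn_eq_1])
    also have "\<dots> \<le> l2sq \<phi> - 2 * t * (2 * \<delta> * l2sq \<phi>) + t\<^sup>2 * (K * l2sq \<phi>)"
      using sgn_schrod_form_lower_bound[OF \<phi>] M(2) t by (intro add_mono diff_mono mult_left_mono) auto
    also have "\<dots> = q\<^sup>2 * l2sq \<phi>"
      unfolding q(3) t_def using K by (simp add: field_simps power2_eq_square)
    finally show "(\<lambda>n. \<phi> n - complex_of_real (t * sgn (d n)) * ?M n) \<in> l2Z \<and>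
        l2sq (\<lambda>n. \<phi> n - complex_of_real (t * sgn (d n)) * ?M n) \<le> q\<^sup>2 * l2sq \<phi>"
      using l2Z_diff_scaled[of \<phi> ?M "\<lambda>n. sgn (d n)", OF \<phi> M(1) abs_sgn_eq_1] by blast
  qed
qed

lemma schrod_invertible:
  obtains G C where "\<And>\<psi>. \<psi> \<in> l2Z \<Longrightarrow> G \<psi> \<in> l2Z" "\<And>\<psi>. \<psi> \<in> l2Z \<Longrightarrow> l2norm (G \<psi>) \<le> C * l2norm \<psi>"
    "\<And>\<phi>. \<phi> \<in> l2Z \<Longrightarrow> G (schrod d \<phi>) = \<phi>" "\<And>\<psi>. \<psi> \<in> l2Z \<Longrightarrow> schrod d (G \<psi>) = \<psi>"
proof -
  obtain \<sigma> :: "int \<Rightarrow> complex" and t q where t: "0 < t" and \<sigma>: "\<And>n. cmod (\<sigma> n) = t"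
    and contraction: "tridiag_contraction (\<lambda>n. - \<sigma> n) (\<lambda>n. 1 - \<sigma> n * d n) (\<lambda>n. - \<sigma> n) q"
    using damped_contraction by metis
  interpret tridiag_contraction "\<lambda>n. - \<sigma> n" "\<lambda>n. 1 - \<sigma> n * d n" "\<lambda>n. - \<sigma> n" q
    by (fact contraction)
  define G where "G \<psi> = neumann (\<lambda>n. \<sigma> n * \<psi> n)" for \<psi>
  show thesis
  proof (rule that[of G "t / (1 - q)"])
    fix \<psi> assume \<psi>: "\<psi> \<in> l2Z"
    have \<sigma>\<psi>: "(\<lambda>n. \<sigma> n * \<psi> n) \<in> l2Z" "l2norm (\<lambda>n. \<sigma> n * \<psi> n) \<le> t * l2norm \<psi>"
      using l2Z_mult_bounded[OF \<psi>, of \<sigma> t] l2norm_mult_bounded_le[OF \<psi>, of \<sigma> t] \<sigma> by simp_all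
    show "G \<psi> \<in> l2Z"
      unfolding G_def by (rule neumann_l2Z[OF \<sigma>\<psi>(1)])
    have "l2norm (G \<psi>) \<le> l2norm (\<lambda>n. \<sigma> n * \<psi> n) / (1 - q)"
      unfolding G_def by (rule l2norm_neumann_le[OF \<sigma>\<psi>(1)])
    also have "\<dots> \<le> t / (1 - q) * l2norm \<psi>"
      using \<sigma>\<psi>(2) q_less_1 by (simp add: divide_right_mono)
    finally show "l2norm (G \<psi>) \<le> t / (1 - q) * l2norm \<psi>" .
    show "schrod d (G \<psi>) = \<psi>"
    proof
      fix n
      have "\<sigma> n * schrod d (G \<psi>) n = \<sigma> n * \<psi> n"
        using neumann_right_inverse[OF \<sigma>\<psi>(1), of n] unfolding tridiag_damped_schrod G_def by simp
      then show "schrod d (G \<psi>) n = \<psi> n"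
        using \<sigma>[of n] t by auto
    qed
  next
    fix \<phi> assume \<phi>: "\<phi> \<in> l2Z"
    show "G (schrod d \<phi>) = \<phi>"
      using neumann_left_inverse[OF \<phi>] unfolding tridiag_damped_schrod G_def by simp
  qed
qed

end

lemma not_in_schrod_spectrumI:
  assumes "gapped_potential (\<lambda>n. V n - E) \<delta> D"
  shows "E \<notin> schrod_spectrum V"
proof -
  obtain G C where "\<And>\<psi>. \<psi> \<in> l2Z \<Longrightarrow> G \<psi> \<in> l2Z" "\<And>\<psi>. \<psi> \<in> l2Z \<Longrightarrow> l2norm (G \<psi>) \<le> C * l2norm \<psi>"
    "\<And>\<phi>. \<phi> \<in> l2Z \<Longrightarrow> G (schrod (\<lambda>n. V n - E) \<phi>) = \<phi>"
    "\<And>\<psi>. \<psi> \<in> l2Z \<Longrightarrow> schrod (\<lambda>n. V n - E) (G \<psi>) = \<psi>"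
    using gapped_potential.schrod_invertible[OF assms] by blast
  then show ?thesis
    unfolding schrod_spectrum_def schrod_minus_const by blast
qed

section \<open>Weyl sequences from Bloch waves\<close>

lemma in_schrod_spectrumI:
  assumes "\<And>\<epsilon>. 0 < \<epsilon> \<Longrightarrow> \<exists>\<phi>\<in>l2Z. schrod (\<lambda>n. V n - E) \<phi> \<in> l2Z \<and> l2norm (schrod (\<lambda>n. V n - E) \<phi>) < \<epsilon> * l2norm \<phi>"
  shows "E \<in> schrod_spectrum V"
proof (rule ccontr)
  assume "E \<notin> schrod_spectrum V"
  then obtain G C where bounded: "\<forall>\<psi>\<in>l2Z. l2norm (G \<psi>) \<le> C * l2norm \<psi>"
    and left_inverse: "\<forall>\<phi>\<in>l2Z. G (schrod (\<lambda>n. V n - E) \<phi>) = \<phi>"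
    unfolding schrod_spectrum_def schrod_minus_const by blast
  have "0 < 1 / (\<bar>C\<bar> + 1)"
    using abs_ge_zero[of C] by simp
  then obtain \<phi> where \<phi>: "\<phi> \<in> l2Z" "schrod (\<lambda>n. V n - E) \<phi> \<in> l2Z"
    and small: "l2norm (schrod (\<lambda>n. V n - E) \<phi>) < 1 / (\<bar>C\<bar> + 1) * l2norm \<phi>"
    using assms by blast
  let ?r = "l2norm (schrod (\<lambda>n. V n - E) \<phi>)"
  have "l2norm \<phi> \<le> C * ?r"
    using bounded left_inverse \<phi> by metis
  also have "\<dots> \<le> (\<bar>C\<bar> + 1) * ?r"
    by (intro mult_right_mono l2norm_nonneg) simp
  also have "\<dots> < l2norm \<phi>"
    using small by (simp add: field_simps add_pos_nonneg)
  finally show False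
    by simp
qed

lemma unit_circle_root:
  fixes c :: real
  assumes "-1 \<le> c" "c \<le> 1"
  obtains z :: complex where "cmod z = 1" "z\<^sup>2 + 1 = 2 * c * z" "c = -1 \<Longrightarrow> z = -1"
proof
  define s where "s = sqrt (1 - c\<^sup>2)"
  have "c\<^sup>2 \<le> 1"
    using assms by (simp add: abs_square_le_1)
  then have s2: "s\<^sup>2 = 1 - c\<^sup>2"
    by (simp add: s_def)
  show "cmod (Complex c s) = 1"
    using s2 by (simp add: cmod_def)
  show "(Complex c s)\<^sup>2 + 1 = 2 * c * Complex c s"
    using s2 by (simp add: complex_eq_iff power2_eq_square algebra_simps)
  show "c = -1 \<Longrightarrow> Complex c s = -1"
    by (simp add: s_def complex_eq_iff)
qed

definition bloch_wave :: "complex \<Rightarrow> complex \<Rightarrow> complex \<Rightarrow> nat \<Rightarrow> complex" where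
  "bloch_wave \<alpha> \<beta> z j = (if even j then \<alpha> else \<beta>) * z ^ (j div 2)"

lemma bloch_wave_exists:
  assumes "0 \<le> (E - a) * (E - b)" "(E - a) * (E - b) \<le> 4"
  obtains \<alpha> \<beta> z where "cmod z = 1" "0 < (cmod \<alpha>)\<^sup>2 + (cmod \<beta>)\<^sup>2"
    "\<alpha> * (z + 1) = complex_of_real (E - b) * \<beta>" "\<beta> * (z + 1) = complex_of_real (E - a) * \<alpha> * z"
proof -
  \<comment> \<open>\<open>z\<close> solves \<open>z\<^sup>2 - 2 c z + 1 = 0\<close>; it lies on the unit circle because \<open>\<bar>c\<bar> \<le> 1\<close>\<close>
  define c where "c = (E - a) * (E - b) / 2 - 1"
  obtain z :: complex where z: "cmod z = 1" "z\<^sup>2 + 1 = 2 * c * z" "c = -1 \<Longrightarrow> z = -1"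
    using unit_circle_root[of c] assms by (auto simp: c_def)
  show thesis
  proof (cases "E = b")
    case True
    then show thesis
      using z by (intro that[of z 0 1]) (simp_all add: c_def)
  next
    case False
    have "(z + 1) * (z + 1) = z\<^sup>2 + 1 + 2 * z"
      by (simp add: power2_eq_square algebra_simps)
    also have "\<dots> = (2 * complex_of_real c + 2) * z"
      unfolding z(2) by (simp add: algebra_simps)
    also have "2 * complex_of_real c + 2 = complex_of_real (2 * c + 2)"
      by simp
    also have "2 * c + 2 = (E - a) * (E - b)"
      by (simp add: c_def)
    finally have "(z + 1) * (z + 1) = complex_of_real ((E - a) * (E - b)) * z" .
    moreover have "0 < (cmod (z + 1))\<^sup>2 + (cmod (complex_of_real (E - b)))\<^sup>2"
      using False by (intro add_nonneg_pos) auto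
    ultimately show thesis
      using z(1) by (intro that[of z "complex_of_real (E - b)" "z + 1"]) (simp_all add: algebra_simps)
  qed
qed

lemma bloch_wave_recurrence:
  assumes e1: "\<alpha> * (z + 1) = complex_of_real (E - b) * \<beta>"
    and e2: "\<beta> * (z + 1) = complex_of_real (E - a) * \<alpha> * z"
    and j: "1 \<le> j"
  shows "bloch_wave \<alpha> \<beta> z (j + 1) + bloch_wave \<alpha> \<beta> z (j - 1)
    + complex_of_real ((if even j then a else b) - E) * bloch_wave \<alpha> \<beta> z j = 0"
proof (cases "even j")
  case True
  then obtain k where k: "j = 2 * Suc k"
    using j by (metis evenE One_nat_def Suc_pred less_eq_Suc_le mult_eq_0_iff not_gr0 zero_neq_numeral)
  then have "j - 1 = 2 * k + 1"
    by simp
  then have "bloch_wave \<alpha> \<beta> z (j + 1) + bloch_wave \<alpha> \<beta> z (j - 1)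
      + complex_of_real (a - E) * bloch_wave \<alpha> \<beta> z j
      = z ^ k * (\<beta> * (z + 1) - complex_of_real (E - a) * \<alpha> * z)"
    unfolding bloch_wave_def k by (simp add: algebra_simps)
  then show ?thesis
    using True e2 by simp
next
  case False
  then obtain k where k: "j = 2 * k + 1"
    using oddE by blast
  then have "j + 1 = 2 * Suc k"
    by simp
  then have "bloch_wave \<alpha> \<beta> z (j + 1) + bloch_wave \<alpha> \<beta> z (j - 1)
      + complex_of_real (b - E) * bloch_wave \<alpha> \<beta> z j
      = z ^ k * (\<alpha> * (z + 1) - complex_of_real (E - b) * \<beta>)"
    unfolding bloch_wave_def k by (simp add: algebra_simps)
  then show ?thesis
    using False e1 by simp
qed

lemma norm_bloch_wave:
  assumes "cmod z = 1"
  shows "cmod (bloch_wave \<alpha> \<beta> z j) = (if even j then cmod \<alpha> else cmod \<beta>)"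
  using assms by (simp add: bloch_wave_def norm_mult norm_power)

lemma sum_norm_bloch_wave_sq:
  assumes "cmod z = 1"
  shows "(\<Sum>j<2 * L. (cmod (bloch_wave \<alpha> \<beta> z j))\<^sup>2) = real L * ((cmod \<alpha>)\<^sup>2 + (cmod \<beta>)\<^sup>2)"
proof (induction L)
  case 0
  then show ?case by simp
next
  case (Suc L)
  have "{..<2 * Suc L} = insert (2 * L + 1) (insert (2 * L) {..<2 * L})"
    by auto
  then show ?case
    using Suc norm_bloch_wave[OF assms] by (simp add: algebra_simps)
qed

definition periodic_window :: "(int \<Rightarrow> 'a) \<Rightarrow> 'a \<Rightarrow> 'a \<Rightarrow> nat \<Rightarrow> int \<Rightarrow> bool" where
  "periodic_window f a b L m \<longleftrightarrow> (\<forall>n\<in>{2 * m..<2 * m + 2 * int L}. f n = (if even n then a else b))"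

definition truncated_bloch_wave :: "complex \<Rightarrow> complex \<Rightarrow> complex \<Rightarrow> int \<Rightarrow> nat \<Rightarrow> int \<Rightarrow> complex" where
  "truncated_bloch_wave \<alpha> \<beta> z m L n =
    (if 2 * m \<le> n \<and> n < 2 * m + 2 * int L then bloch_wave \<alpha> \<beta> z (nat (n - 2 * m)) else 0)"

lemma
  assumes "cmod z = 1"
  shows truncated_bloch_wave_l2Z: "truncated_bloch_wave \<alpha> \<beta> z m L \<in> l2Z"
    and l2sq_truncated_bloch_wave:
      "l2sq (truncated_bloch_wave \<alpha> \<beta> z m L) = real L * ((cmod \<alpha>)\<^sup>2 + (cmod \<beta>)\<^sup>2)"
proof -
  define S where "S = (\<lambda>j. 2 * m + int j) ` {..<2 * L}"
  have support: "truncated_bloch_wave \<alpha> \<beta> z m L n = 0" if "n \<notin> S" for n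
  proof (rule ccontr)
    assume "truncated_bloch_wave \<alpha> \<beta> z m L n \<noteq> 0"
    then have "2 * m \<le> n" "n < 2 * m + 2 * int L"
      by (auto simp: truncated_bloch_wave_def split: if_splits)
    then have "n \<in> S"
      unfolding S_def by (intro image_eqI[of _ _ "nat (n - 2 * m)"]) auto
    with that show False ..
  qed
  show "truncated_bloch_wave \<alpha> \<beta> z m L \<in> l2Z"
    by (rule l2Z_finite_support[of S, OF _ support]) (simp add: S_def)
  have "l2sq (truncated_bloch_wave \<alpha> \<beta> z m L) = (\<Sum>n\<in>S. (cmod (truncated_bloch_wave \<alpha> \<beta> z m L n))\<^sup>2)"
    by (rule l2sq_finite_support[of S, OF _ support]) (simp add: S_def)
  also have "\<dots> = (\<Sum>j<2 * L. (cmod (bloch_wave \<alpha> \<beta> z j))\<^sup>2)"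
    unfolding S_def by (subst sum.reindex) (auto simp: inj_on_def truncated_bloch_wave_def)
  also have "\<dots> = real L * ((cmod \<alpha>)\<^sup>2 + (cmod \<beta>)\<^sup>2)"
    by (rule sum_norm_bloch_wave_sq[OF assms])
  finally show "l2sq (truncated_bloch_wave \<alpha> \<beta> z m L) = real L * ((cmod \<alpha>)\<^sup>2 + (cmod \<beta>)\<^sup>2)" .
qed

lemma norm_schrod_truncated_bloch_wave_le:
  fixes V :: "int \<Rightarrow> real"
  assumes window: "periodic_window V a b L m" and z: "cmod z = 1"
  shows "cmod (schrod (\<lambda>n. V n - E) (truncated_bloch_wave \<alpha> \<beta> z m L) n)
    \<le> (cmod \<alpha> + cmod \<beta>) * (2 + \<bar>a - E\<bar> + \<bar>b - E\<bar>)"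
proof -
  let ?\<phi> = "truncated_bloch_wave \<alpha> \<beta> z m L"
  define B where "B = cmod \<alpha> + cmod \<beta>"
  have \<phi>_bound: "cmod (?\<phi> k) \<le> B" for k
    using norm_bloch_wave[OF z] by (simp add: truncated_bloch_wave_def B_def)
  have V\<phi>_bound: "cmod (complex_of_real (V n - E) * ?\<phi> n) \<le> (\<bar>a - E\<bar> + \<bar>b - E\<bar>) * B"
  proof (cases "2 * m \<le> n \<and> n < 2 * m + 2 * int L")
    case True
    then have "\<bar>V n - E\<bar> \<le> \<bar>a - E\<bar> + \<bar>b - E\<bar>"
      using window by (auto simp: periodic_window_def)
    then show ?thesis
      unfolding norm_mult norm_of_real using \<phi>_bound[of n] by (intro mult_mono) auto
  next
    case False
    then have "?\<phi> n = 0"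
      unfolding truncated_bloch_wave_def by (rule if_not_P)
    then show ?thesis
      by (simp add: B_def)
  qed
  have "cmod (schrod (\<lambda>n. V n - E) ?\<phi> n)
      \<le> cmod (?\<phi> (n + 1)) + cmod (?\<phi> (n - 1)) + cmod (complex_of_real (V n - E) * ?\<phi> n)"
    unfolding schrod_def by (intro norm_triangle_le add_mono norm_triangle_ineq order_refl)
  also have "\<dots> \<le> B + B + (\<bar>a - E\<bar> + \<bar>b - E\<bar>) * B"
    by (intro add_mono \<phi>_bound V\<phi>_bound)
  finally show ?thesis
    by (simp add: B_def algebra_simps)
qed

lemma schrod_truncated_bloch_wave_eq_0:
  fixes V :: "int \<Rightarrow> real"
  assumes window: "periodic_window V a b L m"
    and e1: "\<alpha> * (z + 1) = complex_of_real (E - b) * \<beta>"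
    and e2: "\<beta> * (z + 1) = complex_of_real (E - a) * \<alpha> * z"
    and n: "n \<notin> {2 * m - 1, 2 * m, 2 * m + 2 * int L - 1, 2 * m + 2 * int L}"
  shows "schrod (\<lambda>n. V n - E) (truncated_bloch_wave \<alpha> \<beta> z m L) n = 0"
proof (cases "2 * m + 1 \<le> n \<and> n \<le> 2 * m + 2 * int L - 2")
  case True
  let ?\<phi> = "truncated_bloch_wave \<alpha> \<beta> z m L"
  define j where "j = nat (n - 2 * m)"
  have j: "1 \<le> j" "nat (n - 2 * m) = j" "nat (n + 1 - 2 * m) = j + 1" "nat (n - 1 - 2 * m) = j - 1"
    "even j \<longleftrightarrow> even n"
    using True by (auto simp: j_def even_nat_iff)
  have "?\<phi> (n + 1) = bloch_wave \<alpha> \<beta> z (j + 1)" "?\<phi> (n - 1) = bloch_wave \<alpha> \<beta> z (j - 1)"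
    "?\<phi> n = bloch_wave \<alpha> \<beta> z j" "V n = (if even j then a else b)"
    using True j(2-5) window by (simp_all add: truncated_bloch_wave_def periodic_window_def)
  then have "schrod (\<lambda>n. V n - E) ?\<phi> n = bloch_wave \<alpha> \<beta> z (j + 1) + bloch_wave \<alpha> \<beta> z (j - 1)
      + complex_of_real ((if even j then a else b) - E) * bloch_wave \<alpha> \<beta> z j"
    by (simp add: schrod_def)
  also have "\<dots> = 0"
    by (rule bloch_wave_recurrence[OF e1 e2 j(1)])
  finally show ?thesis .
next
  case False
  have outside: "truncated_bloch_wave \<alpha> \<beta> z m L k = 0" if "k \<in> {n - 1, n, n + 1}" for k
  proof -
    have "\<not> (2 * m \<le> k \<and> k < 2 * m + 2 * int L)"
      using that False n by auto
    then show ?thesis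
      unfolding truncated_bloch_wave_def by (rule if_not_P)
  qed
  show ?thesis
    using outside[of "n - 1"] outside[of n] outside[of "n + 1"] by (simp add: schrod_def)
qed

lemma
  fixes V :: "int \<Rightarrow> real"
  assumes window: "periodic_window V a b L m" and z: "cmod z = 1"
    and e1: "\<alpha> * (z + 1) = complex_of_real (E - b) * \<beta>"
    and e2: "\<beta> * (z + 1) = complex_of_real (E - a) * \<alpha> * z"
  shows schrod_truncated_bloch_wave_l2Z:
      "schrod (\<lambda>n. V n - E) (truncated_bloch_wave \<alpha> \<beta> z m L) \<in> l2Z"
    and l2norm_schrod_truncated_bloch_wave_le:
      "l2norm (schrod (\<lambda>n. V n - E) (truncated_bloch_wave \<alpha> \<beta> z m L))
        \<le> 2 * ((cmod \<alpha> + cmod \<beta>) * (2 + \<bar>a - E\<bar> + \<bar>b - E\<bar>))"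
proof -
  define T where "T = {2 * m - 1, 2 * m, 2 * m + 2 * int L - 1, 2 * m + 2 * int L}"
  have support: "n \<notin> T \<Longrightarrow> schrod (\<lambda>n. V n - E) (truncated_bloch_wave \<alpha> \<beta> z m L) n = 0" for n
    unfolding T_def by (rule schrod_truncated_bloch_wave_eq_0[OF window e1 e2])
  show "schrod (\<lambda>n. V n - E) (truncated_bloch_wave \<alpha> \<beta> z m L) \<in> l2Z"
    by (rule l2Z_finite_support[of T, OF _ support]) (simp add: T_def)
  have "card T \<le> 4"
    using card_length[of "[2 * m - 1, 2 * m, 2 * m + 2 * int L - 1, 2 * m + 2 * int L]"] by (simp add: T_def)
  then have "sqrt (card T) \<le> 2"
    using real_sqrt_le_mono[of "card T" 4] by simp
  have "l2norm (schrod (\<lambda>n. V n - E) (truncated_bloch_wave \<alpha> \<beta> z m L))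
      \<le> sqrt (card T) * ((cmod \<alpha> + cmod \<beta>) * (2 + \<bar>a - E\<bar> + \<bar>b - E\<bar>))"
    by (rule l2norm_finite_support_le[OF _ support norm_schrod_truncated_bloch_wave_le[OF window z]])
      (simp add: T_def)
  also have "\<dots> \<le> 2 * ((cmod \<alpha> + cmod \<beta>) * (2 + \<bar>a - E\<bar> + \<bar>b - E\<bar>))"
    using \<open>sqrt (card T) \<le> 2\<close> by (rule mult_right_mono) simp
  finally show "l2norm (schrod (\<lambda>n. V n - E) (truncated_bloch_wave \<alpha> \<beta> z m L))
      \<le> 2 * ((cmod \<alpha> + cmod \<beta>) * (2 + \<bar>a - E\<bar> + \<bar>b - E\<bar>))" .
qed

text \<open>The spectrum of the 2-periodic operator with potential \<open>a\<close> on even and \<open>b\<close> on odd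
  sites: the transfer matrix over one period has trace \<open>(E - a) (E - b) - 2\<close>.\<close>
definition periodic_spectrum :: "real \<Rightarrow> real \<Rightarrow> real set" where
  "periodic_spectrum a b = {E. 0 \<le> (E - a) * (E - b) \<and> (E - a) * (E - b) \<le> 4}"

lemma periodic_spectrum_subset_schrod_spectrum:
  assumes E: "E \<in> periodic_spectrum a b" and windows: "\<And>L. \<exists>m. periodic_window V a b L m"
  shows "E \<in> schrod_spectrum V"
proof (rule in_schrod_spectrumI)
  fix \<epsilon> :: real
  assume \<epsilon>: "0 < \<epsilon>"
  have "0 \<le> (E - a) * (E - b)" "(E - a) * (E - b) \<le> 4"
    using E by (simp_all add: periodic_spectrum_def)
  then obtain \<alpha> \<beta> z where z: "cmod z = 1" and c: "0 < (cmod \<alpha>)\<^sup>2 + (cmod \<beta>)\<^sup>2"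
    and e1: "\<alpha> * (z + 1) = complex_of_real (E - b) * \<beta>"
    and e2: "\<beta> * (z + 1) = complex_of_real (E - a) * \<alpha> * z"
    by (rule bloch_wave_exists)
  define C where "C = 2 * ((cmod \<alpha> + cmod \<beta>) * (2 + \<bar>a - E\<bar> + \<bar>b - E\<bar>))"
  define c0 where "c0 = (cmod \<alpha>)\<^sup>2 + (cmod \<beta>)\<^sup>2"
  have pos: "0 < \<epsilon>\<^sup>2 * c0"
    using \<epsilon> c by (simp add: c0_def)
  obtain L :: nat where "C\<^sup>2 / (\<epsilon>\<^sup>2 * c0) < real L"
    using reals_Archimedean2 by blast
  then have L: "C\<^sup>2 < \<epsilon>\<^sup>2 * (real L * c0)"
    using pos_divide_less_eq[OF pos] by (simp add: mult_ac)
  obtain m where window: "periodic_window V a b L m"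
    using windows by blast
  let ?\<phi> = "truncated_bloch_wave \<alpha> \<beta> z m L"
  have "l2norm (schrod (\<lambda>n. V n - E) ?\<phi>) \<le> C"
    unfolding C_def by (rule l2norm_schrod_truncated_bloch_wave_le[OF window z e1 e2])
  also have "C < sqrt (\<epsilon>\<^sup>2 * (real L * c0))"
    using L by (rule real_less_rsqrt)
  also have "\<dots> = \<epsilon> * l2norm ?\<phi>"
    using \<epsilon> by (simp add: l2norm_eq_sqrt_l2sq l2sq_truncated_bloch_wave[OF z] real_sqrt_mult c0_def)
  finally show "\<exists>\<phi>\<in>l2Z. schrod (\<lambda>n. V n - E) \<phi> \<in> l2Z \<and> l2norm (schrod (\<lambda>n. V n - E) \<phi>) < \<epsilon> * l2norm \<phi>"
    using truncated_bloch_wave_l2Z[OF z] schrod_truncated_bloch_wave_l2Z[OF window z e1 e2] by blast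
qed

section \<open>Potentials containing every periodic window\<close>

text \<open>The conditions of \<^locale>\<open>gapped_potential\<close> for two values \<open>a\<close>, \<open>b\<close> at neighbouring sites.\<close>
definition gap_margin :: "real \<Rightarrow> real \<Rightarrow> real \<Rightarrow> real \<Rightarrow> bool" where
  "gap_margin a b E \<delta> \<longleftrightarrow> 2 * \<delta> \<le> \<bar>a - E\<bar> \<and> 2 * \<delta> \<le> \<bar>b - E\<bar> \<and>
    (0 < (a - E) * (b - E) \<longrightarrow> 1 \<le> (\<bar>a - E\<bar> / 2 - \<delta>) * (\<bar>b - E\<bar> / 2 - \<delta>))"

lemma gap_margin_mono:
  assumes "gap_margin a b E \<delta>" "\<delta>' \<le> \<delta>"
  shows "gap_margin a b E \<delta>'"
proof -
  have "(\<bar>a - E\<bar> / 2 - \<delta>) * (\<bar>b - E\<bar> / 2 - \<delta>) \<le> (\<bar>a - E\<bar> / 2 - \<delta>') * (\<bar>b - E\<bar> / 2 - \<delta>')"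
    using assms by (intro mult_mono) (auto simp: gap_margin_def)
  then show ?thesis
    using assms by (auto simp: gap_margin_def)
qed

lemma gap_margin_exists:
  assumes "E \<notin> periodic_spectrum a b"
  obtains \<delta> where "0 < \<delta>" "gap_margin a b E \<delta>"
proof -
  define u where "u = \<bar>a - E\<bar> / 2"
  define w where "w = \<bar>b - E\<bar> / 2"
  have prod: "(a - E) * (b - E) = (E - a) * (E - b)"
    by (simp add: algebra_simps)
  have "a \<noteq> E" "b \<noteq> E"
    using assms by (auto simp: periodic_spectrum_def)
  then have u: "0 < u" and w: "0 < w"
    by (auto simp: u_def w_def)
  have uw: "u * w = \<bar>(a - E) * (b - E)\<bar> / 4"
    by (simp add: u_def w_def abs_mult)
  show thesis
  proof (cases "(E - a) * (E - b) < 0")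
    case True
    have "2 * min u w \<le> \<bar>a - E\<bar>" "2 * min u w \<le> \<bar>b - E\<bar>"
      by (simp_all add: u_def w_def min_def)
    moreover have "\<not> 0 < (a - E) * (b - E)"
      using True prod by simp
    ultimately show thesis
      using u w by (intro that[of "min u w"]) (simp_all add: gap_margin_def)
  next
    case False
    then have "1 < u * w"
      using assms uw prod by (auto simp: periodic_spectrum_def)
    define \<delta> where "\<delta> = min (min u w) ((u * w - 1) / (u + w))"
    have \<delta>: "0 < \<delta>" "\<delta> \<le> u" "\<delta> \<le> w"
      using u w \<open>1 < u * w\<close> by (simp_all add: \<delta>_def)
    have "\<delta> \<le> (u * w - 1) / (u + w)"
      by (simp add: \<delta>_def)
    then have "\<delta> * (u + w) \<le> u * w - 1"
      using u w by (simp add: pos_le_divide_eq)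
    moreover have "(u - \<delta>) * (w - \<delta>) = u * w - \<delta> * (u + w) + \<delta> * \<delta>"
      by (simp add: algebra_simps)
    moreover have "0 \<le> \<delta> * \<delta>"
      by simp
    ultimately have "1 \<le> (u - \<delta>) * (w - \<delta>)"
      by linarith
    then show thesis
      using \<delta> by (intro that[of \<delta>]) (auto simp: gap_margin_def u_def w_def)
  qed
qed

lemma common_gap_margin:
  assumes A: "finite A" and B: "finite B" and E: "E \<notin> (\<Union>a\<in>A. \<Union>b\<in>B. periodic_spectrum a b)"
  obtains \<delta> where "0 < \<delta>" "\<And>a b. a \<in> A \<Longrightarrow> b \<in> B \<Longrightarrow> gap_margin a b E \<delta>"
proof -
  have "\<exists>\<delta>. 0 < \<delta> \<and> gap_margin a b E \<delta>" if "a \<in> A" "b \<in> B" for a b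
    using gap_margin_exists[of E a b] E that by blast
  then obtain \<Delta> where \<Delta>: "\<And>a b. a \<in> A \<Longrightarrow> b \<in> B \<Longrightarrow> 0 < \<Delta> a b \<and> gap_margin a b E (\<Delta> a b)"
    by metis
  define \<delta> where "\<delta> = Min (insert 1 (case_prod \<Delta> ` (A \<times> B)))"
  show thesis
  proof (rule that)
    show "0 < \<delta>"
      using A B \<Delta> by (auto simp: \<delta>_def)
    show "gap_margin a b E \<delta>" if "a \<in> A" "b \<in> B" for a b
    proof (rule gap_margin_mono)
      show "gap_margin a b E (\<Delta> a b)"
        using \<Delta> that by blast
      show "\<delta> \<le> \<Delta> a b"
        using A B that unfolding \<delta>_def by (intro Min_le) force+
    qed
  qed
qed

lemma gapped_potential_if_gap_margin:
  assumes \<delta>: "0 < \<delta>" and A: "finite A" and B: "finite B"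
    and V: "\<And>n. even n \<Longrightarrow> V n \<in> A" "\<And>n. odd n \<Longrightarrow> V n \<in> B"
    and margin: "\<And>a b. a \<in> A \<Longrightarrow> b \<in> B \<Longrightarrow> gap_margin a b E \<delta>"
  shows "gapped_potential (\<lambda>n. V n - E) \<delta> ((\<Sum>a\<in>A. \<bar>a - E\<bar>) + (\<Sum>b\<in>B. \<bar>b - E\<bar>))"
proof
  have pair: "gap_margin (V n) (V (n + 1)) E \<delta> \<or> gap_margin (V (n + 1)) (V n) E \<delta>" for n
    by (cases "even n") (simp_all add: margin V)
  show "0 < \<delta>"
    by (fact \<delta>)
  show "2 * \<delta> \<le> \<bar>V n - E\<bar>" for n
    using pair[of n] by (auto simp: gap_margin_def)
  show "1 \<le> (\<bar>V n - E\<bar> / 2 - \<delta>) * (\<bar>V (n + 1) - E\<bar> / 2 - \<delta>)"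
    if "0 < (V n - E) * (V (n + 1) - E)" for n
    using pair[of n] that by (auto simp: gap_margin_def mult.commute)
  have "0 \<le> (\<Sum>a\<in>A. \<bar>a - E\<bar>)" "0 \<le> (\<Sum>b\<in>B. \<bar>b - E\<bar>)"
    by (simp_all add: sum_nonneg)
  moreover have "\<bar>V n - E\<bar> \<le> (\<Sum>a\<in>A. \<bar>a - E\<bar>) \<or> \<bar>V n - E\<bar> \<le> (\<Sum>b\<in>B. \<bar>b - E\<bar>)" for n
    using A B V[of n] by (cases "even n") (auto intro: member_le_sum[where f = "\<lambda>x. \<bar>x - E\<bar>"])
  ultimately show "\<bar>V n - E\<bar> \<le> (\<Sum>a\<in>A. \<bar>a - E\<bar>) + (\<Sum>b\<in>B. \<bar>b - E\<bar>)" for n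
    by (meson add_increasing add_increasing2)
qed

lemma schrod_spectrum_subset_periodic_spectra:
  assumes A: "finite A" and B: "finite B"
    and V: "\<And>n. even n \<Longrightarrow> V n \<in> A" "\<And>n. odd n \<Longrightarrow> V n \<in> B"
  shows "schrod_spectrum V \<subseteq> (\<Union>a\<in>A. \<Union>b\<in>B. periodic_spectrum a b)"
proof
  fix E
  assume "E \<in> schrod_spectrum V"
  show "E \<in> (\<Union>a\<in>A. \<Union>b\<in>B. periodic_spectrum a b)"
  proof (rule ccontr)
    assume "E \<notin> (\<Union>a\<in>A. \<Union>b\<in>B. periodic_spectrum a b)"
    then obtain \<delta> where \<delta>: "0 < \<delta>" and margin: "\<And>a b. a \<in> A \<Longrightarrow> b \<in> B \<Longrightarrow> gap_margin a b E \<delta>"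
      using common_gap_margin[OF A B] by blast
    have "gapped_potential (\<lambda>n. V n - E) \<delta> ((\<Sum>a\<in>A. \<bar>a - E\<bar>) + (\<Sum>b\<in>B. \<bar>b - E\<bar>))"
      by (rule gapped_potential_if_gap_margin[OF \<delta> A B V margin])
    then show False
      using \<open>E \<in> schrod_spectrum V\<close> not_in_schrod_spectrumI by blast
  qed
qed

theorem schrod_spectrum_eq_periodic_spectra:
  assumes "finite A" "finite B"
    and "\<And>n. even n \<Longrightarrow> V n \<in> A" "\<And>n. odd n \<Longrightarrow> V n \<in> B"
    and "\<And>a b L. a \<in> A \<Longrightarrow> b \<in> B \<Longrightarrow> \<exists>m. periodic_window V a b L m"
  shows "schrod_spectrum V = (\<Union>a\<in>A. \<Union>b\<in>B. periodic_spectrum a b)"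
proof
  show "schrod_spectrum V \<subseteq> (\<Union>a\<in>A. \<Union>b\<in>B. periodic_spectrum a b)"
    by (rule schrod_spectrum_subset_periodic_spectra[OF assms(1-4)])
  show "(\<Union>a\<in>A. \<Union>b\<in>B. periodic_spectrum a b) \<subseteq> schrod_spectrum V"
    using periodic_spectrum_subset_schrod_spectrum assms(5) by (intro UN_least) blast
qed

section \<open>Band edges\<close>

text \<open>The roots of \<open>(E - a) (E - b) = 4\<close>, i.e. the outer edges of \<^term>\<open>periodic_spectrum a b\<close>.\<close>
definition band_bottom :: "real \<Rightarrow> real \<Rightarrow> real" where
  "band_bottom a b = (a + b - sqrt ((a - b)\<^sup>2 + 16)) / 2"

definition band_top :: "real \<Rightarrow> real \<Rightarrow> real" where
  "band_top a b = (a + b + sqrt ((a - b)\<^sup>2 + 16)) / 2"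

lemma abs_less_sqrt_sq_add_16: "\<bar>x\<bar> < sqrt (x\<^sup>2 + 16)"
  using real_sqrt_less_mono[of "x\<^sup>2" "x\<^sup>2 + 16"] by simp

lemma band_bottom_less: "band_bottom a b < a" "band_bottom a b < b"
  using abs_less_sqrt_sq_add_16[of "a - b"] by (auto simp: band_bottom_def abs_if split: if_splits)

lemma band_top_greater: "a < band_top a b" "b < band_top a b"
  using abs_less_sqrt_sq_add_16[of "a - b"] by (auto simp: band_top_def abs_if split: if_splits)

lemma sqrt_sq_add_16_lipschitz: "sqrt (x\<^sup>2 + 16) - sqrt (y\<^sup>2 + 16) \<le> \<bar>x - y\<bar>"
proof -
  define S where "S = sqrt (y\<^sup>2 + 16)"
  define d where "d = \<bar>x - y\<bar>"
  have "y * (x - y) \<le> \<bar>y\<bar> * d"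
    by (metis abs_ge_self abs_mult d_def)
  also have "\<dots> \<le> S * d"
    using abs_less_sqrt_sq_add_16[of y] by (intro mult_right_mono) (simp_all add: S_def d_def)
  finally have "y * (x - y) \<le> S * d" .
  moreover have "S * S = y\<^sup>2 + 16" "d * d = (x - y)\<^sup>2"
    by (simp_all add: S_def d_def power2_eq_square)
  moreover have "x\<^sup>2 = y\<^sup>2 + 2 * (y * (x - y)) + (x - y)\<^sup>2"
    by (simp add: power2_eq_square algebra_simps)
  ultimately have "x\<^sup>2 + 16 \<le> (S + d)\<^sup>2"
    by (simp add: power2_eq_square algebra_simps)
  then have "sqrt (x\<^sup>2 + 16) \<le> S + d"
    using real_sqrt_le_mono by (fastforce simp: S_def d_def)
  then show ?thesis
    by (simp add: S_def d_def)
qed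

lemma band_bottom_mono: "a \<le> a' \<Longrightarrow> b \<le> b' \<Longrightarrow> band_bottom a b \<le> band_bottom a' b'"
  using sqrt_sq_add_16_lipschitz[of "a' - b'" "a - b"] by (auto simp: band_bottom_def abs_if split: if_splits)

lemma band_top_mono: "a \<le> a' \<Longrightarrow> b \<le> b' \<Longrightarrow> band_top a b \<le> band_top a' b'"
  using sqrt_sq_add_16_lipschitz[of "a - b" "a' - b'"] by (auto simp: band_top_def abs_if split: if_splits)

lemma band_edges_product: "(E - a) * (E - b) - 4 = (E - band_bottom a b) * (E - band_top a b)"
proof -
  define R where "R = sqrt ((a - b)\<^sup>2 + 16)"
  have R: "R * R = (a - b)\<^sup>2 + 16"
    by (simp add: R_def)
  have "(E - band_bottom a b) * (E - band_top a b) = (E - (a + b - R) / 2) * (E - (a + b + R) / 2)"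
    by (simp add: band_bottom_def band_top_def R_def)
  also have "\<dots> = E * E - (a + b) * E + ((a + b) * (a + b) - R * R) / 4"
    by (simp add: field_simps)
  also have "\<dots> = (E - a) * (E - b) - 4"
    unfolding R by (simp add: power2_eq_square field_simps)
  finally show ?thesis ..
qed

lemma not_in_periodic_spectrum_iff:
  "E \<notin> periodic_spectrum a b \<longleftrightarrow>
    E < band_bottom a b \<or> band_top a b < E \<or> (a < E \<and> E < b) \<or> (b < E \<and> E < a)"
proof -
  have "band_bottom a b < band_top a b"
    using band_bottom_less(1) band_top_greater(1) by (rule less_trans)
  then have "4 < (E - a) * (E - b) \<longleftrightarrow> E < band_bottom a b \<or> band_top a b < E"
    using band_edges_product[of E a b] by (smt (verit) mult_less_0_iff zero_less_mult_iff)
  then show ?thesis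
    by (auto simp: periodic_spectrum_def mult_less_0_iff not_le)
qed

section \<open>Independent Bernoulli sequences\<close>

definition bern_factor :: "real \<Rightarrow> real \<Rightarrow> int \<Rightarrow> bool measure" where
  "bern_factor p0 p1 n = measure_pmf (bernoulli_pmf (if even n then p0 else p1))"

lemma bern_measure_eq_PiM: "bern_measure p0 p1 = PiM UNIV (bern_factor p0 p1)"
  by (simp add: bern_measure_def bern_factor_def[abs_def])

lemma space_bern_factor [simp]: "space (bern_factor p0 p1 n) = UNIV"
  and sets_bern_factor [simp]: "sets (bern_factor p0 p1 n) = UNIV"
  by (simp_all add: bern_factor_def)

lemma prob_space_bern_factor: "prob_space (bern_factor p0 p1 n)"
  by (simp add: bern_factor_def prob_space_measure_pmf)

lemma product_prob_space_bern_factor: "product_prob_space (bern_factor p0 p1)"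
  by (simp add: product_prob_space_def product_prob_space_axioms_def product_sigma_finite_def
      prob_space_bern_factor prob_space_imp_sigma_finite)

lemma prob_space_bern_measure: "prob_space (bern_measure p0 p1)"
  unfolding bern_measure_eq_PiM by (intro prob_space_PiM prob_space_bern_factor)

lemma space_bern_measure [simp]: "space (bern_measure p0 p1) = UNIV"
  by (simp add: bern_measure_eq_PiM space_PiM)

lemma indep_vars_bern_coordinates:
  "prob_space.indep_vars (bern_measure p0 p1) (bern_factor p0 p1) (\<lambda>n \<xi>. \<xi> n) UNIV"
proof -
  interpret prob_space "bern_measure p0 p1"
    by (rule prob_space_bern_measure)
  show ?thesis
  proof (subst indep_vars_iff_distr_eq_PiM)
    show "random_variable (bern_factor p0 p1 n) (\<lambda>\<xi>. \<xi> n)" for n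
      unfolding bern_measure_eq_PiM by (rule measurable_component_singleton) simp
    have "PiM UNIV (\<lambda>n. distr (bern_measure p0 p1) (bern_factor p0 p1 n) (\<lambda>\<xi>. \<xi> n)) = bern_measure p0 p1"
      unfolding bern_measure_eq_PiM
      by (intro PiM_cong refl distr_PiM_component) (auto simp: prob_space_bern_factor)
    then show "distr (bern_measure p0 p1) (PiM UNIV (bern_factor p0 p1)) (\<lambda>\<xi>. \<lambda>n\<in>UNIV. \<xi> n)
        = PiM UNIV (\<lambda>n. distr (bern_measure p0 p1) (bern_factor p0 p1 n) (\<lambda>\<xi>. \<xi> n))"
      unfolding restrict_UNIV by (simp add: bern_measure_eq_PiM distr_id)
  qed simp
qed

definition window_block :: "nat \<Rightarrow> nat \<Rightarrow> int set" where
  "window_block L k = {2 * int (k * L)..<2 * int (k * L) + 2 * int L}"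

lemma disjoint_family_window_block: "disjoint_family (window_block L)"
proof -
  have "window_block L k \<inter> window_block L k' = {}" if "k < k'" for k k'
  proof -
    have "(k + 1) * L \<le> k' * L"
      using that by (intro mult_right_mono) auto
    then have "2 * int (k * L) + 2 * int L \<le> 2 * int (k' * L)"
      by (simp add: algebra_simps flip: of_nat_add of_nat_mult)
    then show ?thesis
      by (auto simp: window_block_def)
  qed
  then show ?thesis
    unfolding disjoint_family_on_def by (metis Int_commute linorder_neqE_nat)
qed

lemma periodic_window_restrict:
  "periodic_window (restrict \<xi> {2 * m..<2 * m + 2 * int L}) x y L m \<longleftrightarrow> periodic_window \<xi> x y L m"
  by (simp add: periodic_window_def)

lemma indep_events_window_mismatch:
  "prob_space.indep_events (bern_measure p0 p1) (\<lambda>k. {\<xi>. \<not> periodic_window \<xi> x y L (int (k * L))}) UNIV"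
proof -
  interpret prob_space "bern_measure p0 p1"
    by (rule prob_space_bern_measure)
  let ?M = "bern_factor p0 p1" and ?B = "window_block L"
  have blocks: "indep_vars (\<lambda>k. PiM (?B k) ?M) (\<lambda>k \<xi>. restrict \<xi> (?B k)) UNIV"
    using indep_vars_restrict[OF indep_vars_bern_coordinates _ disjoint_family_window_block] by simp
  have measurable: "{\<xi> \<in> space (PiM (?B k) ?M). \<not> periodic_window \<xi> x y L (int (k * L))} \<in> sets (PiM (?B k) ?M)"
    for k
  proof -
    have "{\<xi> \<in> space (PiM (?B k) ?M). \<not> periodic_window \<xi> x y L (int (k * L))}
        = (\<Union>n\<in>?B k. (\<lambda>\<xi>. \<xi> n) -` {\<not> (if even n then x else y)} \<inter> space (PiM (?B k) ?M))"
      unfolding periodic_window_def window_block_def by blast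
    also have "\<dots> \<in> sets (PiM (?B k) ?M)"
      by (intro sets.finite_UN measurable_sets[OF measurable_component_singleton])
        (auto simp: window_block_def)
    finally show ?thesis .
  qed
  show ?thesis
    using indep_eventsI_indep_vars[OF blocks measurable] unfolding window_block_def
    by (simp add: periodic_window_restrict)
qed

lemma measure_periodic_window_ge:
  assumes "0 \<le> p0" "p0 \<le> 1" "0 \<le> p1" "p1 \<le> 1"
  shows "(min (min p0 (1 - p0)) (min p1 (1 - p1))) ^ (2 * L)
    \<le> measure (bern_measure p0 p1) {\<xi>. periodic_window \<xi> x y L m}"
proof -
  interpret product_prob_space "bern_factor p0 p1" UNIV
    by (rule product_prob_space_bern_factor)
  define B where "B = {2 * m..<2 * m + 2 * int L}"
  define w where "w n = (if even n then x else y)" for n :: int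
  have "space (PiM UNIV (bern_factor p0 p1)) = UNIV"
    by (simp add: space_PiM)
  then have "{\<xi>. periodic_window \<xi> x y L m} = prod_emb UNIV (bern_factor p0 p1) B (PiE B (\<lambda>n. {w n}))"
    unfolding prod_emb_def by (intro set_eqI) (simp add: restrict_PiE_iff Pi_iff periodic_window_def B_def w_def)
  then have "measure (bern_measure p0 p1) {\<xi>. periodic_window \<xi> x y L m}
      = (\<Prod>n\<in>B. measure (bern_factor p0 p1 n) {w n})"
    unfolding bern_measure_eq_PiM by (simp add: measure_PiM_emb B_def)
  also have "\<dots> \<ge> (\<Prod>n\<in>B. min (min p0 (1 - p0)) (min p1 (1 - p1)))"
  proof (rule prod_mono)
    fix n
    have "measure (bern_factor p0 p1 n) {w n} = pmf (bernoulli_pmf (if even n then p0 else p1)) (w n)"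
      by (simp add: bern_factor_def measure_pmf_single)
    moreover have "min (min p0 (1 - p0)) (min p1 (1 - p1)) \<le> pmf (bernoulli_pmf (if even n then p0 else p1)) (w n)"
      using assms by (cases "w n"; cases "even n") simp_all
    ultimately show "0 \<le> min (min p0 (1 - p0)) (min p1 (1 - p1)) \<and>
        min (min p0 (1 - p0)) (min p1 (1 - p1)) \<le> measure (bern_factor p0 p1 n) {w n}"
      using assms by simp
  qed
  finally show ?thesis
    by (simp add: B_def nat_mult_distrib)
qed

lemma (in prob_space) prob_INT_indep_events_eq_0:
  fixes C :: "nat \<Rightarrow> 'a set"
  assumes indep: "indep_events C UNIV" and bound: "\<And>k. prob (C k) \<le> r" and "r < 1"
  shows "prob (\<Inter>k. C k) = 0"
proof -
  have events: "C k \<in> events" for k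
    using indep by (auto simp: indep_events_def)
  have "0 \<le> r"
    using bound[of 0] measure_nonneg[of M "C 0"] by linarith
  have "prob (\<Inter>k. C k) \<le> r ^ K" for K
  proof -
    have "prob (\<Inter>k. C k) \<le> prob (\<Inter>k\<in>{..K}. C k)"
      using events by (intro finite_measure_mono) auto
    also have "\<dots> = (\<Prod>k\<in>{..K}. prob (C k))"
      using indep unfolding indep_events_def by auto
    also have "\<dots> \<le> r ^ Suc K"
      using prod_mono[of "{..K}" "\<lambda>k. prob (C k)" "\<lambda>_. r"] bound by simp
    also have "\<dots> \<le> r ^ K"
      using \<open>0 \<le> r\<close> \<open>r < 1\<close> by (intro power_decreasing) auto
    finally show ?thesis .
  qed
  moreover have "(\<lambda>K. r ^ K) \<longlonglongrightarrow> 0"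
    using \<open>0 \<le> r\<close> \<open>r < 1\<close> by (intro LIMSEQ_power_zero) auto
  ultimately have "prob (\<Inter>k. C k) \<le> 0"
    by (intro LIMSEQ_le_const[of _ 0]) auto
  then show ?thesis
    using measure_nonneg[of M "\<Inter>k. C k"] by linarith
qed

lemma AE_periodic_window:
  assumes "0 < p0" "p0 < 1" "0 < p1" "p1 < 1"
  shows "AE \<xi> in bern_measure p0 p1. \<exists>m. periodic_window \<xi> x y L m"
proof -
  interpret prob_space "bern_measure p0 p1"
    by (rule prob_space_bern_measure)
  define \<mu> where "\<mu> = min (min p0 (1 - p0)) (min p1 (1 - p1))"
  define C where "C k = {\<xi>. \<not> periodic_window \<xi> x y L (int (k * L))}" for k
  have indep: "indep_events C UNIV"
    unfolding C_def by (rule indep_events_window_mismatch)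
  then have events: "C k \<in> events" for k
    by (auto simp: indep_events_def)
  have "prob (C k) \<le> 1 - \<mu> ^ (2 * L)" for k
  proof -
    have "space (bern_measure p0 p1) - C k = {\<xi>. periodic_window \<xi> x y L (int (k * L))}"
      by (auto simp: C_def)
    then show ?thesis
      using prob_compl[OF events[of k]] measure_periodic_window_ge[of p0 p1 L x y "int (k * L)"] assms
      by (simp add: \<mu>_def)
  qed
  moreover have "1 - \<mu> ^ (2 * L) < 1"
    using assms by (simp add: \<mu>_def)
  ultimately have "prob (\<Inter>k. C k) = 0"
    by (rule prob_INT_indep_events_eq_0[OF indep])
  then have "(\<Inter>k. C k) \<in> null_sets (bern_measure p0 p1)"
    using events by (simp add: emeasure_eq_measure null_setsI sets.countable_INT')
  then have "AE \<xi> in bern_measure p0 p1. \<xi> \<notin> (\<Inter>k. C k)"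
    by (rule AE_not_in)
  then show ?thesis
    by (rule eventually_mono) (auto simp: C_def)
qed

lemma AE_all_periodic_windows:
  assumes "0 < p0" "p0 < 1" "0 < p1" "p1 < 1"
  shows "AE \<xi> in bern_measure p0 p1. \<forall>x y L. \<exists>m. periodic_window \<xi> x y L m"
  using AE_periodic_window[OF assms] by (simp add: AE_all_countable)

section \<open>The Bernoulli potential\<close>

definition bernoulli_spectrum :: "real \<Rightarrow> real \<Rightarrow> real \<Rightarrow> real set" where
  "bernoulli_spectrum l0 l1 c1 = (\<Union>a\<in>{0, l0}. \<Union>b\<in>{c1, c1 + l1}. periodic_spectrum a b)"

lemma periodic_window_pot:
  assumes "periodic_window \<xi> x y L m"
  shows "periodic_window (pot l0 l1 c1 \<xi>) (if x then l0 else 0) (if y then c1 + l1 else c1) L m"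
  using assms by (auto simp: periodic_window_def pot_def)

lemma AE_schrod_spectrum_pot:
  assumes "0 < p0" "p0 < 1" "0 < p1" "p1 < 1"
  shows "AE \<xi> in bern_measure p0 p1. schrod_spectrum (pot l0 l1 c1 \<xi>) = bernoulli_spectrum l0 l1 c1"
  using AE_all_periodic_windows[OF assms]
proof (rule eventually_mono)
  fix \<xi> :: "int \<Rightarrow> bool"
  assume windows: "\<forall>x y L. \<exists>m. periodic_window \<xi> x y L m"
  show "schrod_spectrum (pot l0 l1 c1 \<xi>) = bernoulli_spectrum l0 l1 c1"
    unfolding bernoulli_spectrum_def
  proof (rule schrod_spectrum_eq_periodic_spectra)
    show "pot l0 l1 c1 \<xi> n \<in> {0, l0}" if "even n" for n
      using that by (simp add: pot_def)
    show "pot l0 l1 c1 \<xi> n \<in> {c1, c1 + l1}" if "odd n" for n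
      using that by (simp add: pot_def)
    show "\<exists>m. periodic_window (pot l0 l1 c1 \<xi>) a b L m" if "a \<in> {0, l0}" "b \<in> {c1, c1 + l1}" for a b L
    proof -
      have "\<exists>x. a = (if x then l0 else 0)" "\<exists>y. b = (if y then c1 + l1 else c1)"
        using that by (auto intro: exI[of _ True] exI[of _ False])
      then obtain x y where "a = (if x then l0 else 0)" "b = (if y then c1 + l1 else c1)"
        by blast
      moreover obtain m where "periodic_window \<xi> x y L m"
        using windows by blast
      ultimately show ?thesis
        using periodic_window_pot by blast
    qed
  qed simp_all
qed

lemma not_in_bernoulli_spectrum_iff:
  "E \<notin> bernoulli_spectrum l0 l1 c1 \<longleftrightarrow>
    E \<notin> periodic_spectrum 0 c1 \<and> E \<notin> periodic_spectrum l0 c1 \<and>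
    E \<notin> periodic_spectrum 0 (c1 + l1) \<and> E \<notin> periodic_spectrum l0 (c1 + l1)"
  by (auto simp: bernoulli_spectrum_def)

lemma band_edges_order:
  assumes "0 \<le> l0" "0 \<le> l1" "0 \<le> c1"
  shows "band_bottom 0 c1 \<le> band_bottom l0 c1" "band_bottom l0 c1 \<le> band_bottom l0 (c1 + l1)"
    "band_bottom 0 c1 \<le> band_bottom 0 (c1 + l1)" "band_bottom 0 (c1 + l1) \<le> band_bottom l0 (c1 + l1)"
    "band_top 0 c1 \<le> band_top l0 c1" "band_top l0 c1 \<le> band_top l0 (c1 + l1)"
    "band_top 0 c1 \<le> band_top 0 (c1 + l1)" "band_top 0 (c1 + l1) \<le> band_top l0 (c1 + l1)"
  using assms by (auto intro!: band_bottom_mono band_top_mono)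

lemma resolvent_set_case1:
  assumes "0 \<le> l0" "0 \<le> l1" "0 \<le> c1" "l0 \<le> c1"
  shows "UNIV - bernoulli_spectrum l0 l1 c1 =
    {..<band_bottom 0 c1} \<union> {0<..<band_bottom l0 c1} \<union> {l0<..<c1}
      \<union> {band_top l0 c1<..<c1 + l1} \<union> {band_top l0 (c1 + l1)<..}"
  using band_edges_order[OF assms(1-3)] band_bottom_less band_top_greater assms
  unfolding set_eq_iff Compl_eq_Diff_UNIV[symmetric] Compl_iff not_in_bernoulli_spectrum_iff
    not_in_periodic_spectrum_iff Un_iff lessThan_iff greaterThan_iff greaterThanLessThan_iff
  by smt

lemma resolvent_set_case2:
  assumes "0 \<le> l0" "0 \<le> l1" "0 \<le> c1" "c1 < l0" "l0 < c1 + l1"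
  shows "UNIV - bernoulli_spectrum l0 l1 c1 =
    {..<band_bottom 0 c1} \<union> {0<..<band_bottom l0 c1} \<union> {band_top 0 c1<..<band_bottom l0 (c1 + l1)}
      \<union> {band_top l0 c1<..<c1 + l1} \<union> {band_top l0 (c1 + l1)<..}"
  using band_edges_order[OF assms(1-3)] band_bottom_less band_top_greater assms
  unfolding set_eq_iff Compl_eq_Diff_UNIV[symmetric] Compl_iff not_in_bernoulli_spectrum_iff
    not_in_periodic_spectrum_iff Un_iff lessThan_iff greaterThan_iff greaterThanLessThan_iff
  by smt

lemma resolvent_set_case3:
  assumes "0 \<le> l0" "0 \<le> l1" "0 \<le> c1" "c1 + l1 \<le> l0"
  shows "UNIV - bernoulli_spectrum l0 l1 c1 =
    {..<band_bottom 0 c1} \<union> {0<..<band_bottom l0 c1} \<union> {band_top 0 c1<..<band_bottom l0 (c1 + l1)}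
      \<union> {band_top 0 (c1 + l1)<..<l0} \<union> {band_top l0 (c1 + l1)<..}"
  using band_edges_order[OF assms(1-3)] band_bottom_less band_top_greater assms
  unfolding set_eq_iff Compl_eq_Diff_UNIV[symmetric] Compl_iff not_in_bernoulli_spectrum_iff
    not_in_periodic_spectrum_iff Un_iff lessThan_iff greaterThan_iff greaterThanLessThan_iff
  by smt

theorem mainTheorem6:
  fixes l0 l1 c1 p0 p1 :: real
  assumes "l0 \<ge> 0" "l1 \<ge> 0" "c1 \<ge> 0"
    and "0 < p0" "p0 < 1" "0 < p1" "p1 < 1"
  defines "R1 \<equiv> sqrt ((l0 + c1)\<^sup>2 - 4 * (c1 * l0 - 4))"
    and "R2 \<equiv> sqrt ((l0 + l1 + c1)\<^sup>2 - 4 * (l0 * (l1 + c1) - 4))"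
  shows
   "(l0 \<le> c1 \<and> c1 \<le> c1 + l1 \<longrightarrow>
      (AE \<xi> in bern_measure p0 p1. UNIV - schrod_spectrum (pot l0 l1 c1 \<xi>) =
          {..<(c1 - sqrt (c1\<^sup>2 + 16)) / 2}
        \<union> {0<..<(l0 + c1 - R1) / 2}
        \<union> {l0<..<c1}
        \<union> {(l0 + c1 + R1) / 2<..<c1 + l1}
        \<union> {(l0 + l1 + c1 + R2) / 2<..})) \<and>
    (c1 < l0 \<and> l0 < c1 + l1 \<longrightarrow>
      (AE \<xi> in bern_measure p0 p1. UNIV - schrod_spectrum (pot l0 l1 c1 \<xi>) =
          {..<(c1 - sqrt (c1\<^sup>2 + 16)) / 2}
        \<union> {0<..<(l0 + c1 - R1) / 2}
        \<union> {(c1 + sqrt (c1\<^sup>2 + 16)) / 2<..<(l0 + l1 + c1 - R2) / 2}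
        \<union> {(l0 + c1 + R1) / 2<..<c1 + l1}
        \<union> {(l0 + l1 + c1 + R2) / 2<..})) \<and>
    (c1 \<le> c1 + l1 \<and> c1 + l1 \<le> l0 \<longrightarrow>
      (AE \<xi> in bern_measure p0 p1. UNIV - schrod_spectrum (pot l0 l1 c1 \<xi>) =
          {..<(c1 - sqrt (c1\<^sup>2 + 16)) / 2}
        \<union> {0<..<(l0 + c1 - R1) / 2}
        \<union> {(c1 + sqrt (c1\<^sup>2 + 16)) / 2<..<(l0 + l1 + c1 - R2) / 2}
        \<union> {(c1 + l1 + sqrt ((c1 + l1)\<^sup>2 + 16)) / 2<..<l0}
        \<union> {(l0 + l1 + c1 + R2) / 2<..}))"
proof -
  have AE: "AE \<xi> in bern_measure p0 p1.
      UNIV - schrod_spectrum (pot l0 l1 c1 \<xi>) = UNIV - bernoulli_spectrum l0 l1 c1"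
    using AE_schrod_spectrum_pot[of p0 p1 l0 l1 c1, OF assms(4-7)]
    by (rule eventually_mono) simp
  have R: "sqrt ((l0 - c1)\<^sup>2 + 16) = R1" "sqrt ((l0 - (c1 + l1))\<^sup>2 + 16) = R2"
    unfolding R1_def R2_def by (simp_all add: power2_eq_square algebra_simps)
  have edges:
    "band_bottom 0 c1 = (c1 - sqrt (c1\<^sup>2 + 16)) / 2" "band_top 0 c1 = (c1 + sqrt (c1\<^sup>2 + 16)) / 2"
    "band_top 0 (c1 + l1) = (c1 + l1 + sqrt ((c1 + l1)\<^sup>2 + 16)) / 2"
    "band_bottom l0 c1 = (l0 + c1 - R1) / 2" "band_top l0 c1 = (l0 + c1 + R1) / 2"
    "band_bottom l0 (c1 + l1) = (l0 + l1 + c1 - R2) / 2" "band_top l0 (c1 + l1) = (l0 + l1 + c1 + R2) / 2"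
    unfolding band_bottom_def band_top_def R power2_commute[of 0] by (simp_all add: ac_simps)
  show ?thesis
    using AE resolvent_set_case1[OF assms(1-3)] resolvent_set_case2[OF assms(1-3)]
      resolvent_set_case3[OF assms(1-3)]
    unfolding edges by auto
qed

end
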